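(* Let $X$ be a finite alphabet with at least two letters, $k\ge2$, $\mathcal M$ an automaton over $X$, $A:C_{\mathcal M}\to\bar k$, and $(F,c)\in\mathcal F_{\mathcal T_k}$. If $F\le_h(C_{\mathcal M};\le_0,\le_1,A)$, then $B\le_{CA}A\circ f_{\mathcal M}$ for every $B\in\mathbf\Sigma(F)$.
   Context: $f_{\mathcal M}(\xi)$ is the set of states visited infinitely often on input $\xi$; $C_{\mathcal M}=\{f_{\mathcal M}(\xi):\xi\in X^\omega\}$; $c\le_0 d$ iff the states of $d$ are reachable from those of $c$; $c\le_1d$ iff $c\supseteq d$; $[c]_0$ is the $\equiv_0$-class of $c$. Forests: finite $F\subseteq\omega^+$ closed under nonempty prefixes (prefix order); trees: finite prefix-closed $V\subseteq\omega^*$; $\mathcal F_{\mathcal T_k}$: forests labeled by $\bar k$-labeled trees $(V,v)$. $F\le_h(C_{\mathcal M};\le_0,\le_1,A)$ means: there is a monotone $\varphi:(F,\sqsubseteq)\to(C_{\mathcal M};\le_0)$ such that for every $\tau\in F$ with $c(\tau)=(V,v)$ there is a monotone $\psi:(V,\sqsubseteq)\to([\varphi(\tau)]_0;\le_1)$ with $v(\sigma)=A(\psi(\sigma))$ for all $\sigma\in V$. $B\le_{CA}D$ iff $B=D\circ g$ for a continuous $g:X^\omega\to X^\omega$. $\mathbf\Sigma(F)$: the set of $k$-partitions determined by some $F$-family over the 2-base $(\mathbf\Sigma^0_1,\mathbf\Sigma^0_2)$ (open sets, countable unions of closed sets), where an $F$-family is $\{U_\tau\}_{\tau\in F}$ open,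 $U_{\tau i}\subseteq U_\tau$, $\bigcup U_\tau=X^\omega$, plus for each $\tau$ with $c(\tau)=(V,v)$ sets $U_{\tau\sigma}=\tilde U_\tau\cap B_{\tau\sigma}$, $B_{\tau\sigma}\in\mathbf\Sigma^0_2$, $U_{\tau\sigma i}\subseteq U_{\tau\sigma}$, $\bigcup_\sigma U_{\tau\sigma}=\tilde U_\tau$ (with $\tilde U_\tau=U_\tau\setminus\bigcup_{\tau i\in F}U_{\tau i}$), and it determines $B$ if $B(x)=v(\sigma)$ whenever $x\in U_{\tau\sigma}\setminus\bigcup_{\sigma i\in V}U_{\tau\sigma i}$. *)

theory Defs
  imports Main "HOL-Library.Sublist"
begin

definition open_w :: "(nat \<Rightarrow> 'x) set \<Rightarrow> bool" where
  "open_w U \<longleftrightarrow> (\<forall>\<xi>\<in>U. \<exists>n. \<forall>\<eta>. (\<forall>i<n. \<eta> i = \<xi> i) \<longrightarrow> \<eta> \<in> U)"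

definition closed_w :: "(nat \<Rightarrow> 'x) set \<Rightarrow> bool" where
  "closed_w U \<longleftrightarrow> open_w (- U)"

definition Sigma02 :: "(nat \<Rightarrow> 'x) set set" where
  "Sigma02 = {S. \<exists>Cs :: nat \<Rightarrow> (nat \<Rightarrow> 'x) set. (\<forall>n. closed_w (Cs n)) \<and> S = \<Union>(range Cs)}"

definition cont_w :: "((nat \<Rightarrow> 'x) \<Rightarrow> (nat \<Rightarrow> 'y)) \<Rightarrow> bool" where
  "cont_w g \<longleftrightarrow> (\<forall>\<xi> n. \<exists>m. \<forall>\<eta>. (\<forall>i<m. \<eta> i = \<xi> i) \<longrightarrow> (\<forall>i<n. g \<eta> i = g \<xi> i))"

definition le_CA :: "((nat \<Rightarrow> 'x) \<Rightarrow> 'a) \<Rightarrow> ((nat \<Rightarrow> 'x) \<Rightarrow> 'a) \<Rightarrow> bool" where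
  "le_CA B D \<longleftrightarrow> (\<exists>g :: (nat \<Rightarrow> 'x) \<Rightarrow> (nat \<Rightarrow> 'x). cont_w g \<and> B = D \<circ> g)"

fun run :: "('q \<Rightarrow> 'x \<Rightarrow> 'q) \<Rightarrow> 'q \<Rightarrow> (nat \<Rightarrow> 'x) \<Rightarrow> nat \<Rightarrow> 'q" where
  "run \<delta> q0 \<xi> 0 = q0"
| "run \<delta> q0 \<xi> (Suc n) = \<delta> (run \<delta> q0 \<xi> n) (\<xi> n)"

definition fM :: "('q \<Rightarrow> 'x \<Rightarrow> 'q) \<Rightarrow> 'q \<Rightarrow> (nat \<Rightarrow> 'x) \<Rightarrow> 'q set" where
  "fM \<delta> q0 \<xi> = {q. \<exists>\<^sub>\<infinity>n. run \<delta> q0 \<xi> n = q}"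

definition CM :: "('q \<Rightarrow> 'x \<Rightarrow> 'q) \<Rightarrow> 'q \<Rightarrow> 'q set set" where
  "CM \<delta> q0 = range (fM \<delta> q0)"

definition reach :: "('q \<Rightarrow> 'x \<Rightarrow> 'q) \<Rightarrow> 'q \<Rightarrow> 'q \<Rightarrow> bool" where
  "reach \<delta> p q \<longleftrightarrow> (p, q) \<in> {(a, \<delta> a x) | a x. True}\<^sup>*"

definition le0 :: "('q \<Rightarrow> 'x \<Rightarrow> 'q) \<Rightarrow> 'q set \<Rightarrow> 'q set \<Rightarrow> bool" where
  "le0 \<delta> c d \<longleftrightarrow> (\<forall>q\<in>d. \<exists>p\<in>c. reach \<delta> p q)"

definition eq0 :: "('q \<Rightarrow> 'x \<Rightarrow> 'q) \<Rightarrow> 'q set \<Rightarrow> 'q set \<Rightarrow> bool" where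
  "eq0 \<delta> c d \<longleftrightarrow> le0 \<delta> c d \<and> le0 \<delta> d c"

definition cls0 :: "('q \<Rightarrow> 'x \<Rightarrow> 'q) \<Rightarrow> 'q \<Rightarrow> 'q set \<Rightarrow> 'q set set" where
  "cls0 \<delta> q0 c = {d \<in> CM \<delta> q0. eq0 \<delta> c d}"

definition is_forest :: "nat list set \<Rightarrow> bool" where
  "is_forest F \<longleftrightarrow> finite F \<and> [] \<notin> F \<and>
     (\<forall>\<tau> \<sigma>. \<tau> @ \<sigma> \<in> F \<longrightarrow> \<tau> \<noteq> [] \<longrightarrow> \<tau> \<in> F)"

definition is_tree :: "nat list set \<Rightarrow> bool" where
  "is_tree V \<longleftrightarrow> finite V \<and> (\<forall>\<tau> \<sigma>. \<tau> @ \<sigma> \<in> V \<longrightarrow> \<tau> \<in> V)"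

text \<open>(F,c) \<in> F_{T_k}: c assigns to each node a \<bar>k-labeled tree (V,v).\<close>
definition labeled_forest ::
  "nat \<Rightarrow> nat list set \<Rightarrow> (nat list \<Rightarrow> nat list set \<times> (nat list \<Rightarrow> nat)) \<Rightarrow> bool" where
  "labeled_forest k F c \<longleftrightarrow> is_forest F \<and>
     (\<forall>\<tau>\<in>F. is_tree (fst (c \<tau>)) \<and> (\<forall>\<sigma>\<in>fst (c \<tau>). snd (c \<tau>) \<sigma> < k))"

definition h_red ::
  "nat list set \<Rightarrow> (nat list \<Rightarrow> nat list set \<times> (nat list \<Rightarrow> nat)) \<Rightarrow>
   ('q \<Rightarrow> 'x \<Rightarrow> 'q) \<Rightarrow> 'q \<Rightarrow> ('q set \<Rightarrow> nat) \<Rightarrow> bool" where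
  "h_red F c \<delta> q0 A \<longleftrightarrow>
     (\<exists>\<phi> :: nat list \<Rightarrow> 'q set.
        (\<forall>\<tau>\<in>F. \<phi> \<tau> \<in> CM \<delta> q0) \<and>
        (\<forall>\<tau>\<in>F. \<forall>\<tau>'\<in>F. prefix \<tau> \<tau>' \<longrightarrow> le0 \<delta> (\<phi> \<tau>) (\<phi> \<tau>')) \<and>
        (\<forall>\<tau>\<in>F. \<exists>\<psi> :: nat list \<Rightarrow> 'q set.
           (\<forall>\<sigma>\<in>fst (c \<tau>). \<psi> \<sigma> \<in> cls0 \<delta> q0 (\<phi> \<tau>)) \<and>
           (\<forall>\<sigma>\<in>fst (c \<tau>). \<forall>\<sigma>'\<in>fst (c \<tau>). prefix \<sigma> \<sigma>' \<longrightarrow> \<psi> \<sigma> \<supseteq> \<psi> \<sigma>') \<and>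
           (\<forall>\<sigma>\<in>fst (c \<tau>). snd (c \<tau>) \<sigma> = A (\<psi> \<sigma>))))"

definition Util :: "nat list set \<Rightarrow> (nat list \<Rightarrow> (nat \<Rightarrow> 'x) set) \<Rightarrow> nat list \<Rightarrow> (nat \<Rightarrow> 'x) set" where
  "Util F U \<tau> = U \<tau> - \<Union>{U (\<tau> @ [i]) | i. \<tau> @ [i] \<in> F}"

text \<open>U gives the sets U_tau (tau in F); W tau sigma gives the sets U_{tau sigma} (sigma in V).\<close>
definition F_family ::
  "nat list set \<Rightarrow> (nat list \<Rightarrow> nat list set \<times> (nat list \<Rightarrow> nat)) \<Rightarrow>
   (nat list \<Rightarrow> (nat \<Rightarrow> 'x) set) \<Rightarrow> (nat list \<Rightarrow> nat list \<Rightarrow> (nat \<Rightarrow> 'x) set) \<Rightarrow> bool" where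
  "F_family F c U W \<longleftrightarrow>
     (\<forall>\<tau>\<in>F. open_w (U \<tau>)) \<and>
     (\<forall>\<tau>\<in>F. \<forall>i. \<tau> @ [i] \<in> F \<longrightarrow> U (\<tau> @ [i]) \<subseteq> U \<tau>) \<and>
     \<Union>(U ` F) = UNIV \<and>
     (\<forall>\<tau>\<in>F. \<exists>Bs :: nat list \<Rightarrow> (nat \<Rightarrow> 'x) set.
        (\<forall>\<sigma>\<in>fst (c \<tau>). Bs \<sigma> \<in> Sigma02 \<and> W \<tau> \<sigma> = Util F U \<tau> \<inter> Bs \<sigma>) \<and>
        (\<forall>\<sigma>\<in>fst (c \<tau>). \<forall>i. \<sigma> @ [i] \<in> fst (c \<tau>) \<longrightarrow> W \<tau> (\<sigma> @ [i]) \<subseteq> W \<tau> \<sigma>) \<and>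
        \<Union>(W \<tau> ` fst (c \<tau>)) = Util F U \<tau>)"

definition determines ::
  "nat list set \<Rightarrow> (nat list \<Rightarrow> nat list set \<times> (nat list \<Rightarrow> nat)) \<Rightarrow>
   (nat list \<Rightarrow> nat list \<Rightarrow> (nat \<Rightarrow> 'x) set) \<Rightarrow> ((nat \<Rightarrow> 'x) \<Rightarrow> nat) \<Rightarrow> bool" where
  "determines F c W B \<longleftrightarrow>
     (\<forall>\<tau>\<in>F. \<forall>\<sigma>\<in>fst (c \<tau>). \<forall>x.
        x \<in> W \<tau> \<sigma> - \<Union>{W \<tau> (\<sigma> @ [i]) | i. \<sigma> @ [i] \<in> fst (c \<tau>)} \<longrightarrow> B x = snd (c \<tau>) \<sigma>)"

definition SigmaF ::
  "nat \<Rightarrow> nat list set \<Rightarrow> (nat list \<Rightarrow> nat list set \<times> (nat list \<Rightarrow> nat)) \<Rightarrow> ((nat \<Rightarrow> 'x) \<Rightarrow> nat) set" where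
  "SigmaF k F c = {B. (\<forall>x. B x < k) \<and>
     (\<exists>U W. F_family F c U W \<and> determines F c W B)}"

end

theory Submission
  imports Defs "HOL-Library.Infinite_Set"
begin

text \<open>
  The reduction reads x and writes a word on which the automaton eventually visits exactly the
  set \<psi> \<tau> \<sigma> that the h-reduction assigns to the node \<tau> of F and the node \<sigma> of its
  tree determining B x; both nodes are found in the limit.  As the sets U \<tau> are open, the node
  \<tau> with x in its U-set but in none of its children's is reached by moving down F whenever the
  prefix of x read so far forces membership in a U-set.  Membership in the Sigma02 sets of
  the tree of \<tau> is approximated stagewise, and the resulting guess eventually extends \<sigma> and
  equals \<sigma> infinitely often.  At each stage the word walks to the set assigned to the current
  guess and tours it completely.  Such walks exist because the assigned sets are strongly
  connected and only go up in le0 when the node of F changes; while \<tau> is fixed the walk stays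
  inside the set of the common prefix of two consecutive guesses, which by antitonicity
  eventually lies in \<psi> \<tau> \<sigma>.  Hence the states visited infinitely often are exactly those of
  \<psi> \<tau> \<sigma>, whose label is B x.
\<close>

section \<open>Eventual behaviour of sequences\<close>

lemma mono_nat_crossing:
  fixes f :: "nat \<Rightarrow> nat"
  assumes "mono f" "f m < n" "n \<le> f t"
  shows "\<exists>s\<ge>m. f s < n \<and> n \<le> f (Suc s)"
  using assms(3)
proof (induction t)
  case 0
  then show ?case using assms(1,2) monoD[of f 0 m] by simp
next
  case (Suc t)
  show ?case
  proof (cases "n \<le> f t")
    case False
    have "m \<le> t"
    proof (rule ccontr)
      assume "\<not> m \<le> t"
      then have "f (Suc t) \<le> f m" using monoD[OF assms(1)] by simp
      then show False using Suc.prems assms(2) by simp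
    qed
    then show ?thesis using False Suc.prems by auto
  qed (rule Suc.IH)
qed

lemma INFM_intervals_iff:
  fixes l :: "nat \<Rightarrow> nat"
  assumes mono: "mono l" and unbounded: "\<And>i. \<exists>s. i < l s"
  shows "(\<exists>\<^sub>\<infinity>n. P n) \<longleftrightarrow> (\<exists>\<^sub>\<infinity>s. \<exists>n\<in>{l s<..l (Suc s)}. P n)"
proof
  assume freq: "\<exists>\<^sub>\<infinity>n. P n"
  show "\<exists>\<^sub>\<infinity>s. \<exists>n\<in>{l s<..l (Suc s)}. P n"
    unfolding INFM_nat_le
  proof
    fix m
    obtain n where "n > l m" "P n"
      using freq unfolding INFM_nat by blast
    moreover obtain t where "n < l t"
      using unbounded by blast
    ultimately obtain s where "s \<ge> m" "n \<in> {l s<..l (Suc s)}"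
      using mono_nat_crossing[OF mono, of m n t] by auto
    with \<open>P n\<close> show "\<exists>s\<ge>m. \<exists>n\<in>{l s<..l (Suc s)}. P n"
      by blast
  qed
next
  assume freq: "\<exists>\<^sub>\<infinity>s. \<exists>n\<in>{l s<..l (Suc s)}. P n"
  show "\<exists>\<^sub>\<infinity>n. P n"
    unfolding INFM_nat
  proof
    fix m
    obtain t where "m < l t"
      using unbounded by blast
    moreover obtain s n where "s \<ge> t" "l s < n" "P n"
      using freq unfolding INFM_nat_le by (meson greaterThanAtMost_iff)
    moreover have "l t \<le> l s"
      using monoD[OF mono \<open>s \<ge> t\<close>] .
    ultimately show "\<exists>n>m. P n"
      by (intro exI[of _ n]) simp
  qed
qed

lemma MOST_Suc_eq_imp_const:
  assumes "\<forall>\<^sub>\<infinity>s. f (Suc s) = f s"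
  shows "\<exists>c. \<forall>\<^sub>\<infinity>s. f s = c"
proof -
  obtain N where N: "\<And>s. s \<ge> N \<Longrightarrow> f (Suc s) = f s"
    using assms unfolding MOST_nat_le by blast
  have "f s = f N" if "s \<ge> N" for s
    using that by (induction s rule: dec_induct) (simp_all add: N)
  then show ?thesis
    unfolding MOST_nat_le by blast
qed

lemma INFM_Suc_iff: "(\<exists>\<^sub>\<infinity>n. P (Suc n)) \<longleftrightarrow> (\<exists>\<^sub>\<infinity>n. P n)"
  using arg_cong[OF MOST_Suc_iff[of "\<lambda>n. \<not> P n"], of Not] by (simp only: not_MOST not_not)

lemma MOST_pred_nat:
  fixes P :: "nat \<Rightarrow> bool"
  assumes "\<forall>\<^sub>\<infinity>s. P s"
  shows "\<forall>\<^sub>\<infinity>s. P (s - 1)"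
proof -
  obtain N where "\<And>s. s \<ge> N \<Longrightarrow> P s"
    using assms unfolding MOST_nat_le by blast
  then have "\<forall>s\<ge>Suc N. P (s - 1)"
    by simp
  then show ?thesis
    unfolding MOST_nat_le by blast
qed

lemma eventually_const_if_mono_bounded:
  fixes f :: "nat \<Rightarrow> nat"
  assumes "\<forall>\<^sub>\<infinity>s. f s \<le> f (Suc s)" "\<forall>\<^sub>\<infinity>s. f s \<le> b"
  shows "\<exists>l. \<forall>\<^sub>\<infinity>s. f s = l"
proof -
  obtain N where N: "\<And>s. s \<ge> N \<Longrightarrow> f s \<le> f (Suc s) \<and> f s \<le> b"
    using MOST_conjI[OF assms] unfolding MOST_nat_le by blast
  have fin: "finite (f ` {N..})"
    by (rule finite_subset[of _ "{..b}"]) (auto dest: N)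
  obtain s0 where s0: "s0 \<ge> N" "f s0 = Max (f ` {N..})"
    using Max_in[OF fin] by auto
  have "f s0 \<le> f s" if "s0 \<le> s" for s
    using that
  proof (induction s rule: dec_induct)
    case (step n)
    then show ?case using N[of n] s0(1) by simp
  qed simp
  moreover have "f s \<le> f s0" if "s0 \<le> s" for s
    using that s0 Max_ge[OF fin] by simp
  ultimately have "\<forall>s\<ge>s0. f s = f s0"
    using antisym by blast
  then show ?thesis
    unfolding MOST_nat_le by blast
qed

lemma prefix_chain_eventually_const:
  assumes "finite S" "\<forall>\<^sub>\<infinity>s. f s \<in> S" "\<forall>\<^sub>\<infinity>s. prefix (f s) (f (Suc s))"
  shows "\<exists>\<sigma>. \<forall>\<^sub>\<infinity>s. f s = \<sigma>"
proof -
  have "\<forall>\<^sub>\<infinity>s. length (f s) \<le> length (f (Suc s))"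
    using assms(3) by (rule MOST_mono) (rule prefix_length_le)
  moreover have "\<forall>\<^sub>\<infinity>s. length (f s) \<le> Max (length ` S)"
    using assms(2) by (rule MOST_mono) (simp add: assms(1))
  ultimately obtain l where "\<forall>\<^sub>\<infinity>s. length (f s) = l"
    using eventually_const_if_mono_bounded[of "\<lambda>s. length (f s)"] by blast
  then have "\<forall>\<^sub>\<infinity>s. length (f s) = l \<and> length (f (Suc s)) = l \<and> prefix (f s) (f (Suc s))"
    using MOST_SucI[of "\<lambda>s. length (f s) = l"] assms(3) by (simp add: MOST_conj_distrib)
  then have "\<forall>\<^sub>\<infinity>s. f (Suc s) = f s"
    by (rule MOST_mono) (auto simp: prefix_def)
  then show ?thesis
    by (rule MOST_Suc_eq_imp_const)
qed

lemma frequent_values_within_interval: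
  fixes r :: "nat \<Rightarrow> 'a"
  assumes "finite C" "\<And>c. c \<in> C \<Longrightarrow> \<exists>\<^sub>\<infinity>n. r n = c"
  shows "\<exists>b. C \<subseteq> r ` {a<..b}"
proof -
  have "\<forall>c\<in>C. \<exists>n. n > a \<and> r n = c"
    using assms(2) by (simp add: INFM_nat)
  then obtain f where f: "\<And>c. c \<in> C \<Longrightarrow> f c > a \<and> r (f c) = c"
    by (metis bchoice)
  have "C \<subseteq> r ` {a<..Max (f ` C)}"
  proof
    fix c
    assume "c \<in> C"
    then have "c = r (f c)" "f c \<in> {a<..Max (f ` C)}"
      using f[of c] assms(1) by auto
    then show "c \<in> r ` {a<..Max (f ` C)}"
      by blast
  qed
  then show ?thesis ..
qed

lemma eventually_argmin_stable:
  fixes f :: "'i \<Rightarrow> nat \<Rightarrow> nat"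
  assumes "finite I" "S \<subseteq> I" "S \<noteq> {}"
    and converges: "\<And>i. i \<in> S \<Longrightarrow> \<exists>l. \<forall>\<^sub>\<infinity>s. f i s = l"
    and diverges: "\<And>i K. i \<in> I - S \<Longrightarrow> \<forall>\<^sub>\<infinity>s. K < f i s"
  shows "\<exists>m J. J \<noteq> {} \<and> J \<subseteq> S \<and> (\<forall>\<^sub>\<infinity>s. \<forall>i\<in>I. m \<le> f i s \<and> (f i s = m \<longleftrightarrow> i \<in> J))"
proof -
  obtain lim where lim: "\<forall>i\<in>S. \<forall>\<^sub>\<infinity>s. f i s = lim i"
    using bchoice[of S "\<lambda>i l. \<forall>\<^sub>\<infinity>s. f i s = l"] converges by blast
  have finS: "finite S"
    using assms(1,2) finite_subset by blast
  define m where "m = Min (lim ` S)"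
  define J where "J = {i \<in> S. lim i = m}"
  have "m \<in> lim ` S"
    unfolding m_def using finS assms(3) by (intro Min_in) auto
  then have "J \<noteq> {}"
    unfolding J_def by auto
  have "\<forall>\<^sub>\<infinity>s. m \<le> f i s \<and> (f i s = m \<longleftrightarrow> i \<in> J)" if "i \<in> I" for i
  proof (cases "i \<in> S")
    case True
    have "m \<le> lim i"
      unfolding m_def using finS True by simp
    from lim True have "\<forall>\<^sub>\<infinity>s. f i s = lim i"
      by blast
    then show ?thesis
      by (rule MOST_mono) (use \<open>m \<le> lim i\<close> in \<open>auto simp: J_def True\<close>)
  next
    case False
    from diverges[of i m] show ?thesis
      by (rule MOST_mono) (use that False in \<open>auto simp: J_def\<close>)
  qed
  then have "\<forall>\<^sub>\<infinity>s. \<forall>i\<in>I. m \<le> f i s \<and> (f i s = m \<longleftrightarrow> i \<in> J)"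
    by (intro eventually_ball_finite assms(1)) blast
  moreover have "J \<subseteq> S"
    unfolding J_def by blast
  ultimately show ?thesis
    using \<open>J \<noteq> {}\<close> by blast
qed

section \<open>Runs of the automaton\<close>

fun visited :: "('q \<Rightarrow> 'x \<Rightarrow> 'q) \<Rightarrow> 'q \<Rightarrow> 'x list \<Rightarrow> 'q set" where
  "visited \<delta> q [] = {}"
| "visited \<delta> q (a # w) = insert (\<delta> q a) (visited \<delta> (\<delta> q a) w)"

lemma visited_append: "visited \<delta> q (u @ w) = visited \<delta> q u \<union> visited \<delta> (foldl \<delta> q u) w"
  by (induction u arbitrary: q) auto

lemma foldl_run: "a \<le> b \<Longrightarrow> foldl \<delta> (run \<delta> q0 \<xi> a) (map \<xi> [a..<b]) = run \<delta> q0 \<xi> b"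
  by (induction b rule: dec_induct) auto

lemma run_eq_foldl: "run \<delta> q0 \<xi> n = foldl \<delta> q0 (map \<xi> [0..<n])"
  by (induction n) auto

lemma visited_run:
  "a \<le> b \<Longrightarrow> visited \<delta> (run \<delta> q0 \<xi> a) (map \<xi> [a..<b]) = run \<delta> q0 \<xi> ` {a<..b}"
proof (induction b rule: dec_induct)
  case (step b)
  have "{a<..Suc b} = insert (Suc b) {a<..b}"
    using step.hyps by auto
  then show ?case
    using step by (simp add: visited_append foldl_run)
qed simp

lemma fM_nonempty:
  fixes \<delta> :: "'q::finite \<Rightarrow> 'x \<Rightarrow> 'q"
  shows "fM \<delta> q0 \<xi> \<noteq> {}"
proof -
  obtain q where "infinite (run \<delta> q0 \<xi> -` {q})"
    using inf_img_fin_dom[of "run \<delta> q0 \<xi>" UNIV] by auto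
  then show ?thesis
    unfolding fM_def by (auto simp: frequently_cofinite vimage_def)
qed

lemma CM_nonempty:
  fixes \<delta> :: "'q::finite \<Rightarrow> 'x \<Rightarrow> 'q"
  shows "C \<in> CM \<delta> q0 \<Longrightarrow> C \<noteq> {}"
  unfolding CM_def using fM_nonempty by blast

lemma eventually_run_in_fM:
  fixes \<delta> :: "'q::finite \<Rightarrow> 'x \<Rightarrow> 'q"
  shows "\<forall>\<^sub>\<infinity>n. run \<delta> q0 \<xi> n \<in> fM \<delta> q0 \<xi>"
proof -
  have "\<forall>q\<in>- fM \<delta> q0 \<xi>. \<forall>\<^sub>\<infinity>n. run \<delta> q0 \<xi> n \<noteq> q"
    unfolding fM_def by (auto simp: not_frequently)
  then have "\<forall>\<^sub>\<infinity>n. \<forall>q\<in>- fM \<delta> q0 \<xi>. run \<delta> q0 \<xi> n \<noteq> q"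
    by (simp add: eventually_ball_finite)
  then show ?thesis
    by (rule MOST_mono) auto
qed

text \<open>Cut the run at a visit of p so late that only states of C occur afterwards, and at a
  later visit of q by which time all of C has been seen.\<close>

lemma CM_connecting_word:
  fixes \<delta> :: "'q::finite \<Rightarrow> 'x \<Rightarrow> 'q"
  assumes "C \<in> CM \<delta> q0" "p \<in> C" "q \<in> C"
  shows "\<exists>w. w \<noteq> [] \<and> foldl \<delta> p w = q \<and> visited \<delta> p w = C"
proof -
  obtain \<xi> where C: "C = fM \<delta> q0 \<xi>"
    using assms(1) unfolding CM_def by auto
  let ?r = "run \<delta> q0 \<xi>"
  have freq: "\<exists>\<^sub>\<infinity>n. ?r n = c" if "c \<in> C" for c
    using that unfolding C fM_def by blast
  obtain N where N: "\<And>n. n \<ge> N \<Longrightarrow> ?r n \<in> C"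
    using eventually_run_in_fM[of \<delta> q0 \<xi>] unfolding C MOST_nat_le by blast
  obtain a where a: "a \<ge> N" "?r a = p"
    using freq[OF assms(2)] unfolding INFM_nat_le by blast
  obtain b where b: "C \<subseteq> ?r ` {a<..b}"
    using frequent_values_within_interval[of C ?r] freq by fastforce
  obtain e where e: "e > max a b" "?r e = q"
    using freq[OF assms(3)] unfolding INFM_nat by blast
  have "?r ` {a<..e} = C"
  proof
    show "?r ` {a<..e} \<subseteq> C"
      using N a by auto
    show "C \<subseteq> ?r ` {a<..e}"
      using b e by fastforce
  qed
  moreover have "foldl \<delta> p (map \<xi> [a..<e]) = q" "visited \<delta> p (map \<xi> [a..<e]) = ?r ` {a<..e}"
    using a e foldl_run[of a e \<delta> q0 \<xi>] visited_run[of a e \<delta> q0 \<xi>] by simp_all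
  moreover have "map \<xi> [a..<e] \<noteq> []"
    using e by simp
  ultimately show ?thesis
    by blast
qed

lemma reach_imp_word: "reach \<delta> p q \<Longrightarrow> \<exists>w. foldl \<delta> p w = q"
  unfolding reach_def
proof (induction rule: rtrancl_induct)
  case base
  show ?case by (rule exI[of _ "[]"]) simp
next
  case (step y z)
  then obtain w a where "foldl \<delta> p w = y" "z = \<delta> y a" by auto
  then show ?case by (intro exI[of _ "w @ [a]"]) simp
qed

lemma le0_refl: "le0 \<delta> C C"
  unfolding le0_def reach_def by blast

lemma le0_trans: "le0 \<delta> C D \<Longrightarrow> le0 \<delta> D E \<Longrightarrow> le0 \<delta> C E"
  unfolding le0_def reach_def by (meson rtrancl_trans)

lemma eq0_refl: "eq0 \<delta> C C"
  unfolding eq0_def using le0_refl by blast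

lemma le0_connecting_word:
  fixes \<delta> :: "'q::finite \<Rightarrow> 'x \<Rightarrow> 'q"
  assumes "C \<in> CM \<delta> q0" "le0 \<delta> C D" "q \<in> C" "t \<in> D"
  shows "\<exists>w. foldl \<delta> q w = t"
proof -
  obtain p where p: "p \<in> C" "reach \<delta> p t"
    using assms(2,4) unfolding le0_def by blast
  obtain u where "foldl \<delta> q u = p"
    using CM_connecting_word[OF assms(1,3) p(1)] by blast
  moreover obtain v where "foldl \<delta> p v = t"
    using reach_imp_word[OF p(2)] by blast
  ultimately show ?thesis
    by (intro exI[of _ "u @ v"]) simp
qed

lemma CM_reachable_from_initial:
  assumes "C \<in> CM \<delta> q0" "t \<in> C"
  shows "\<exists>w. foldl \<delta> q0 w = t"
proof -
  obtain \<xi> where "C = fM \<delta> q0 \<xi>"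
    using assms(1) unfolding CM_def by auto
  then obtain n where "run \<delta> q0 \<xi> n = t"
    using assms(2) unfolding fM_def by (auto dest: INFM_EX)
  then show ?thesis
    using run_eq_foldl by metis
qed

section \<open>Cylinders and limits of growing words\<close>

definition cylinder :: "(nat \<Rightarrow> 'x) \<Rightarrow> nat \<Rightarrow> (nat \<Rightarrow> 'x) set" where
  "cylinder \<xi> n = {\<eta>. \<forall>i<n. \<eta> i = \<xi> i}"

lemma mem_cylinder_self [simp]: "\<xi> \<in> cylinder \<xi> n"
  unfolding cylinder_def by simp

lemma cylinder_antimono: "m \<le> n \<Longrightarrow> cylinder \<xi> n \<subseteq> cylinder \<xi> m"
  unfolding cylinder_def by auto

lemma cylinder_eq: "\<eta> \<in> cylinder \<xi> n \<Longrightarrow> cylinder \<eta> n = cylinder \<xi> n"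
  unfolding cylinder_def by (simp (no_asm_use)) metis

lemma cylinder_Suc: "\<eta> \<in> cylinder \<xi> (Suc n) \<Longrightarrow> \<eta> \<in> cylinder \<xi> n"
  using cylinder_antimono[of n "Suc n"] by auto

lemma open_w_cylinder: "open_w U \<Longrightarrow> \<xi> \<in> U \<Longrightarrow> \<exists>n. cylinder \<xi> n \<subseteq> U"
  unfolding open_w_def cylinder_def by (simp add: subset_eq)

lemma cont_w_cylinder_iff:
  "cont_w g \<longleftrightarrow> (\<forall>\<xi> n. \<exists>m. \<forall>\<eta>\<in>cylinder \<xi> m. \<forall>i<n. g \<eta> i = g \<xi> i)"
  unfolding cont_w_def cylinder_def by (simp (no_asm))

definition limit_word :: "(nat \<Rightarrow> 'a list) \<Rightarrow> nat \<Rightarrow> 'a" where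
  "limit_word L i = L (SOME s. i < length (L s)) ! i"

lemma prefix_chain_mono:
  assumes "\<And>s. prefix (L s) (L (Suc s))" "s \<le> t"
  shows "prefix (L s) (L t)"
  using assms(2) by (induction t rule: dec_induct) (auto intro: prefix_order.trans assms(1))

lemma limit_word_nth:
  assumes chain: "\<And>s. prefix (L s) (L (Suc s))" and unbounded: "\<And>i. \<exists>s. i < length (L s)"
    and "i < length (L s)"
  shows "limit_word L i = L s ! i"
proof -
  define s' where "s' = (SOME s. i < length (L s))"
  have "i < length (L s')"
    unfolding s'_def using someI_ex[OF unbounded] .
  moreover have "prefix (L s) (L s') \<or> prefix (L s') (L s)"
    using prefix_chain_mono[of L, OF chain] by (cases "s \<le> s'") auto
  ultimately have "L s' ! i = L s ! i"
    using assms(3) by (auto simp: prefix_def nth_append)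
  then show ?thesis
    unfolding limit_word_def s'_def .
qed

lemma map_limit_word:
  assumes "\<And>s. prefix (L s) (L (Suc s))" "\<And>i. \<exists>s. i < length (L s)"
  shows "map (limit_word L) [0..<length (L s)] = L s"
  by (rule nth_equalityI) (simp_all add: limit_word_nth[OF assms])

lemma cont_w_limit_word:
  fixes L :: "(nat \<Rightarrow> 'x) \<Rightarrow> nat \<Rightarrow> 'y list"
  assumes "\<And>x s. prefix (L x s) (L x (Suc s))" "\<And>x i. \<exists>s. i < length (L x s)"
    and "\<And>x \<eta> s. \<eta> \<in> cylinder x s \<Longrightarrow> L \<eta> s = L x s"
  shows "cont_w (\<lambda>x. limit_word (L x))"
  unfolding cont_w_cylinder_iff
proof (intro allI)
  fix \<xi> :: "nat \<Rightarrow> 'x" and n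
  obtain s where "n < length (L \<xi> s)"
    using assms(2) by blast
  then have "\<forall>\<eta>\<in>cylinder \<xi> s. \<forall>i<n. limit_word (L \<eta>) i = limit_word (L \<xi>) i"
    using assms(3) limit_word_nth[OF assms(1,2)] by (metis order.strict_trans)
  then show "\<exists>m. \<forall>\<eta>\<in>cylinder \<xi> m. \<forall>i<n. limit_word (L \<eta>) i = limit_word (L \<xi>) i" ..
qed

lemma visited_limit_word:
  assumes "\<And>s. prefix (L s) (L (Suc s))" "\<And>i. \<exists>s. i < length (L s)"
  shows "visited \<delta> (foldl \<delta> q0 (L s)) (drop (length (L s)) (L (Suc s))) =
    run \<delta> q0 (limit_word L) ` {length (L s)<..length (L (Suc s))}"
proof -
  have "length (L s) \<le> length (L (Suc s))"
    using assms(1) prefix_length_le by blast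
  moreover have "foldl \<delta> q0 (L s) = run \<delta> q0 (limit_word L) (length (L s))"
    by (simp add: run_eq_foldl map_limit_word[OF assms])
  moreover have "drop (length (L s)) (L (Suc s)) = map (limit_word L) [length (L s)..<length (L (Suc s))]"
    using arg_cong[OF map_limit_word[OF assms, of "Suc s"], of "drop (length (L s))"]
    by (simp add: drop_map)
  ultimately show ?thesis
    by (simp add: visited_run)
qed

lemma fM_limit_word:
  assumes chain: "\<And>s. prefix (L s) (L (Suc s))" and unbounded: "\<And>i. \<exists>s. i < length (L s)"
  shows "q \<in> fM \<delta> q0 (limit_word L) \<longleftrightarrow>
    (\<exists>\<^sub>\<infinity>s. q \<in> visited \<delta> (foldl \<delta> q0 (L s)) (drop (length (L s)) (L (Suc s))))"
proof -
  have "mono (\<lambda>s. length (L s))"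
    unfolding mono_iff_le_Suc using chain prefix_length_le by blast
  from INFM_intervals_iff[OF this unbounded] show ?thesis
    unfolding fM_def visited_limit_word[OF chain unbounded] by (simp add: image_iff eq_commute)
qed

section \<open>Stagewise approximation of Sigma02 sets\<close>

text \<open>A stagewise approximation of membership in the union of the C n; the cap Suc s makes the
  search succeed and the value nondecreasing in s.\<close>

definition meet_index :: "(nat \<Rightarrow> (nat \<Rightarrow> 'x) set) \<Rightarrow> (nat \<Rightarrow> 'x) \<Rightarrow> nat \<Rightarrow> nat" where
  "meet_index C x s = (LEAST n. n = Suc s \<or> cylinder x s \<inter> C n \<noteq> {})"

lemma meet_index_cases:
  "meet_index C x s = Suc s \<or> cylinder x s \<inter> C (meet_index C x s) \<noteq> {}"
  unfolding meet_index_def by (rule LeastI[of _ "Suc s"]) simp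

lemma meet_index_le_Suc: "meet_index C x s \<le> Suc s"
  unfolding meet_index_def by (rule Least_le) simp

lemma meet_index_le: "x \<in> C n \<Longrightarrow> meet_index C x s \<le> n"
  unfolding meet_index_def by (rule Least_le) (use mem_cylinder_self[of x s] in blast)

lemma meet_index_Suc: "meet_index C x s \<le> meet_index C x (Suc s)"
  using meet_index_cases[of C x "Suc s"]
proof
  assume "meet_index C x (Suc s) = Suc (Suc s)"
  then show ?thesis using meet_index_le_Suc[of C x s] by simp
next
  assume "cylinder x (Suc s) \<inter> C (meet_index C x (Suc s)) \<noteq> {}"
  then have "cylinder x s \<inter> C (meet_index C x (Suc s)) \<noteq> {}"
    using cylinder_antimono[of s "Suc s" x] by auto
  then show ?thesis
    unfolding meet_index_def[of C x s] by (rule Least_le[OF disjI2])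
qed

lemma meet_index_cong:
  assumes "\<eta> \<in> cylinder x s"
  shows "meet_index C \<eta> s = meet_index C x s"
  unfolding meet_index_def cylinder_eq[OF assms] ..

lemma meet_index_converges:
  assumes "x \<in> \<Union>(range C)"
  shows "\<exists>l. \<forall>\<^sub>\<infinity>s. meet_index C x s = l"
proof -
  obtain n where "x \<in> C n"
    using assms by blast
  then have "\<forall>\<^sub>\<infinity>s. meet_index C x s \<le> n"
    by (simp add: meet_index_le)
  moreover have "\<forall>\<^sub>\<infinity>s. meet_index C x s \<le> meet_index C x (Suc s)"
    by (simp add: meet_index_Suc)
  ultimately show ?thesis
    by (intro eventually_const_if_mono_bounded)
qed

lemma meet_index_diverges:
  assumes "\<And>n. closed_w (C n)" "x \<notin> \<Union>(range C)"
  shows "\<forall>\<^sub>\<infinity>s. K < meet_index C x s"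
proof -
  have "\<forall>\<^sub>\<infinity>s. cylinder x s \<inter> C n = {}" for n
  proof -
    obtain t where "cylinder x t \<subseteq> - C n"
      using open_w_cylinder[of "- C n" x] assms unfolding closed_w_def by blast
    then have "\<forall>s\<ge>t. cylinder x s \<inter> C n = {}"
      using cylinder_antimono[of t _ x] by blast
    then show ?thesis
      unfolding MOST_nat_le by blast
  qed
  then have "\<forall>\<^sub>\<infinity>s. \<forall>n\<in>{..K}. cylinder x s \<inter> C n = {}"
    by (intro eventually_ball_finite) auto
  moreover have "\<forall>\<^sub>\<infinity>s. K < s"
    by (auto simp: MOST_nat)
  ultimately have "\<forall>\<^sub>\<infinity>s. (\<forall>n\<in>{..K}. cylinder x s \<inter> C n = {}) \<and> K < s"
    by (rule MOST_conjI)
  then show ?thesis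
  proof (rule MOST_mono)
    fix s
    assume "(\<forall>n\<in>{..K}. cylinder x s \<inter> C n = {}) \<and> K < s"
    then show "K < meet_index C x s"
      using meet_index_cases[of C x s] by (cases "meet_index C x s \<le> K") auto
  qed
qed

section \<open>Guessing the leaf of a tree of Sigma02 sets\<close>

lemma length_less_card_prefix_closed:
  assumes "finite V" "\<And>\<sigma> \<rho>. \<sigma> \<in> V \<Longrightarrow> prefix \<rho> \<sigma> \<Longrightarrow> \<rho> \<in> V" "\<sigma> \<in> V"
  shows "length \<sigma> < card V"
proof -
  have "set (prefixes \<sigma>) \<subseteq> V"
    using assms(2,3) by auto
  then have "card (set (prefixes \<sigma>)) \<le> card V"
    by (rule card_mono[OF assms(1)])
  then show ?thesis
    by simp
qed

lemma funpow_descent: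
  assumes "[] \<in> V" and step: "\<And>\<sigma>. \<sigma> \<in> V \<Longrightarrow> f \<sigma> = \<sigma> \<or> (\<exists>i. f \<sigma> = \<sigma> @ [i] \<and> \<sigma> @ [i] \<in> V)"
  shows "(f ^^ n) [] \<in> V \<and> (f ((f ^^ n) []) = (f ^^ n) [] \<or> length ((f ^^ n) []) = n) \<and>
    (\<forall>\<sigma>. strict_prefix \<sigma> ((f ^^ n) []) \<longrightarrow> f \<sigma> \<noteq> \<sigma> \<and> prefix (f \<sigma>) ((f ^^ n) []))"
proof (induction n)
  case 0
  then show ?case using assms(1) by simp
next
  case (Suc n)
  let ?g = "(f ^^ n) []"
  have "?g \<in> V"
    using Suc.IH by blast
  from step[OF this] show ?case
  proof
    assume "f ?g = ?g"
    then show ?thesis using Suc.IH by simp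
  next
    assume "\<exists>i. f ?g = ?g @ [i] \<and> ?g @ [i] \<in> V"
    then obtain i where i: "f ?g = ?g @ [i]" "?g @ [i] \<in> V"
      by blast
    then have "length ?g = n"
      using Suc.IH by auto
    moreover have "f \<sigma> \<noteq> \<sigma> \<and> prefix (f \<sigma>) (?g @ [i])" if "strict_prefix \<sigma> (?g @ [i])" for \<sigma>
    proof (cases "\<sigma> = ?g")
      case False
      with that have "strict_prefix \<sigma> ?g"
        by (auto simp: strict_prefix_def)
      then show ?thesis
        using Suc.IH by auto
    qed (use i in simp)
    ultimately show ?thesis
      using i by simp
  qed
qed

lemma funpow_descent_fixpoint:
  assumes "[] \<in> V" "\<And>\<sigma>. \<sigma> \<in> V \<Longrightarrow> f \<sigma> = \<sigma> \<or> (\<exists>i. f \<sigma> = \<sigma> @ [i] \<and> \<sigma> @ [i] \<in> V)"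
    and "finite V" "\<And>\<sigma> \<rho>. \<sigma> \<in> V \<Longrightarrow> prefix \<rho> \<sigma> \<Longrightarrow> \<rho> \<in> V"
  defines "g \<equiv> (f ^^ card V) []"
  shows "g \<in> V" and "f g = g"
    and "strict_prefix \<sigma> g \<Longrightarrow> f \<sigma> \<noteq> \<sigma> \<and> prefix (f \<sigma>) g"
proof -
  note descent = funpow_descent[OF assms(1,2), of "card V", folded g_def]
  then show "g \<in> V"
    by blast
  then show "f g = g"
    using descent length_less_card_prefix_closed[OF assms(3,4)] by fastforce
  show "strict_prefix \<sigma> g \<Longrightarrow> f \<sigma> \<noteq> \<sigma> \<and> prefix (f \<sigma>) g"
    using descent by blast
qed

locale sigma2_tree =
  fixes V :: "nat list set" and C :: "nat list \<Rightarrow> nat \<Rightarrow> (nat \<Rightarrow> 'x) set"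
  assumes finite_V: "finite V"
    and prefix_closed: "\<sigma> \<in> V \<Longrightarrow> prefix \<rho> \<sigma> \<Longrightarrow> \<rho> \<in> V"
    and closed_C: "\<sigma> \<in> V \<Longrightarrow> closed_w (C \<sigma> n)"
begin

definition children :: "nat list \<Rightarrow> nat set" where
  "children \<sigma> = {i. \<sigma> @ [i] \<in> V}"

lemma finite_children: "finite (children \<sigma>)"
proof -
  have "children \<sigma> = (\<lambda>i. \<sigma> @ [i]) -` V"
    unfolding children_def by auto
  then show ?thesis
    using finite_vimageI[OF finite_V, of "\<lambda>i. \<sigma> @ [i]"] by (simp add: inj_def)
qed

definition child_min :: "(nat \<Rightarrow> 'x) \<Rightarrow> nat list \<Rightarrow> nat \<Rightarrow> nat" where
  "child_min x \<sigma> s = Min ((\<lambda>i. meet_index (C (\<sigma> @ [i])) x s) ` children \<sigma>)"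

text \<open>Children whose sets miss x have meet_index tending to infinity, the others converge.
  Hence at a node where some child's set contains x the minimum over the children eventually
  stays fixed and the guess eventually always moves into one such child, while at a node where
  no child's set contains x the minimum changes infinitely often and the guess infinitely often
  stops there.  At s = 0 the comparison with s - 1 is vacuous, which is harmless since only the
  limit matters.\<close>

definition guess_step :: "(nat \<Rightarrow> 'x) \<Rightarrow> nat \<Rightarrow> nat list \<Rightarrow> nat list" where
  "guess_step x s \<sigma> =
    (if children \<sigma> \<noteq> {} \<and> child_min x \<sigma> s = child_min x \<sigma> (s - 1)
     then \<sigma> @ [LEAST i. i \<in> children \<sigma> \<and> meet_index (C (\<sigma> @ [i])) x s = child_min x \<sigma> s]
     else \<sigma>)"

definition guess :: "(nat \<Rightarrow> 'x) \<Rightarrow> nat \<Rightarrow> nat list" where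
  "guess x s = (guess_step x s ^^ card V) []"

lemma guess_step_cases:
  "guess_step x s \<sigma> = \<sigma> \<or> (\<exists>i. guess_step x s \<sigma> = \<sigma> @ [i] \<and> \<sigma> @ [i] \<in> V)"
proof (cases "children \<sigma> \<noteq> {} \<and> child_min x \<sigma> s = child_min x \<sigma> (s - 1)")
  case True
  then have "child_min x \<sigma> s \<in> (\<lambda>i. meet_index (C (\<sigma> @ [i])) x s) ` children \<sigma>"
    unfolding child_min_def using finite_children by (intro Min_in) auto
  then have "\<exists>i. i \<in> children \<sigma> \<and> meet_index (C (\<sigma> @ [i])) x s = child_min x \<sigma> s"
    by auto
  from LeastI_ex[OF this] show ?thesis
    using True unfolding guess_step_def children_def by auto
qed (auto simp: guess_step_def)

lemma
  assumes "[] \<in> V"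
  shows guess_in: "guess x s \<in> V"
    and guess_step_guess: "guess_step x s (guess x s) = guess x s"
    and guess_step_strict_prefix:
      "strict_prefix \<sigma> (guess x s) \<Longrightarrow>
        guess_step x s \<sigma> \<noteq> \<sigma> \<and> prefix (guess_step x s \<sigma>) (guess x s)"
  using funpow_descent_fixpoint[of V "guess_step x s", OF assms guess_step_cases finite_V]
    prefix_closed
  unfolding guess_def by blast+

lemma guess_cong:
  assumes "\<eta> \<in> cylinder x s"
  shows "guess \<eta> s = guess x s"
proof -
  have "\<eta> \<in> cylinder x (s - 1)"
    using assms cylinder_antimono[of "s - 1" s x] by auto
  then have "meet_index D \<eta> t = meet_index D x t" if "t = s \<or> t = s - 1" for D t
    using that assms meet_index_cong by blast
  then have "guess_step \<eta> s = guess_step x s"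
    unfolding guess_step_def child_min_def by (intro ext) simp
  then show ?thesis
    unfolding guess_def by simp
qed

lemma child_min_eqI:
  assumes "\<forall>i\<in>children \<sigma>. m \<le> meet_index (C (\<sigma> @ [i])) x s \<and>
      (meet_index (C (\<sigma> @ [i])) x s = m \<longleftrightarrow> i \<in> J)"
    and "J \<noteq> {}" "J \<subseteq> children \<sigma>"
  shows "child_min x \<sigma> s = m"
  unfolding child_min_def
proof (rule Min_eqI)
  show "m \<in> (\<lambda>i. meet_index (C (\<sigma> @ [i])) x s) ` children \<sigma>"
    using assms by force
qed (use assms(1) finite_children in auto)

lemma guess_step_eq_Least:
  assumes "\<forall>t\<in>{s, s - 1}. \<forall>i\<in>children \<sigma>. m \<le> meet_index (C (\<sigma> @ [i])) x t \<and>
      (meet_index (C (\<sigma> @ [i])) x t = m \<longleftrightarrow> i \<in> J)"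
    and "J \<noteq> {}" "J \<subseteq> children \<sigma>"
  shows "guess_step x s \<sigma> = \<sigma> @ [LEAST i. i \<in> J]"
proof -
  have "child_min x \<sigma> s = m" "child_min x \<sigma> (s - 1) = m"
    using child_min_eqI assms by blast+
  moreover have "(\<lambda>i. i \<in> children \<sigma> \<and> meet_index (C (\<sigma> @ [i])) x s = m) = (\<lambda>i. i \<in> J)"
    using assms(1,3) by auto
  ultimately show ?thesis
    using assms(2,3) unfolding guess_step_def by auto
qed

lemma eventually_guess_step_child:
  assumes "\<exists>i\<in>children \<sigma>. x \<in> \<Union>(range (C (\<sigma> @ [i])))"
  shows "\<exists>j\<in>children \<sigma>. x \<in> \<Union>(range (C (\<sigma> @ [j]))) \<and> (\<forall>\<^sub>\<infinity>s. guess_step x s \<sigma> = \<sigma> @ [j])"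
proof -
  let ?f = "\<lambda>i. meet_index (C (\<sigma> @ [i])) x"
  define S where "S = {i \<in> children \<sigma>. x \<in> \<Union>(range (C (\<sigma> @ [i])))}"
  have "S \<subseteq> children \<sigma>" "S \<noteq> {}"
    unfolding S_def using assms by auto
  moreover have "\<exists>l. \<forall>\<^sub>\<infinity>s. ?f i s = l" if "i \<in> S" for i
    using that unfolding S_def by (blast intro: meet_index_converges)
  moreover have "\<forall>\<^sub>\<infinity>s. K < ?f i s" if "i \<in> children \<sigma> - S" for i K
  proof -
    have "\<sigma> @ [i] \<in> V" "x \<notin> \<Union>(range (C (\<sigma> @ [i])))"
      using that unfolding S_def children_def by auto
    then show ?thesis
      using meet_index_diverges[of "C (\<sigma> @ [i])", OF closed_C] by blast
  qed
  ultimately obtain m J where J: "J \<noteq> {}" "J \<subseteq> S"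
    and min: "\<forall>\<^sub>\<infinity>s. \<forall>i\<in>children \<sigma>. m \<le> ?f i s \<and> (?f i s = m \<longleftrightarrow> i \<in> J)"
    using eventually_argmin_stable[OF finite_children[of \<sigma>], of S ?f] by blast
  have "(LEAST i. i \<in> J) \<in> J"
    using J(1) by (auto intro: LeastI)
  then have "(LEAST i. i \<in> J) \<in> S"
    using J(2) by blast
  moreover have "\<forall>\<^sub>\<infinity>s. \<forall>t\<in>{s, s - 1}. \<forall>i\<in>children \<sigma>. m \<le> ?f i t \<and> (?f i t = m \<longleftrightarrow> i \<in> J)"
    using min MOST_pred_nat[OF min] by (simp add: MOST_conj_distrib)
  then have "\<forall>\<^sub>\<infinity>s. guess_step x s \<sigma> = \<sigma> @ [LEAST i. i \<in> J]"
    by (rule MOST_mono) (use guess_step_eq_Least J \<open>S \<subseteq> children \<sigma>\<close> in blast)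
  ultimately show ?thesis
    unfolding S_def by blast
qed

lemma guess_descends:
  assumes "[] \<in> V" "\<forall>\<^sub>\<infinity>s. prefix \<sigma> (guess x s)"
    and "\<exists>i\<in>children \<sigma>. x \<in> \<Union>(range (C (\<sigma> @ [i])))"
  shows "\<exists>j\<in>children \<sigma>. x \<in> \<Union>(range (C (\<sigma> @ [j]))) \<and> (\<forall>\<^sub>\<infinity>s. prefix (\<sigma> @ [j]) (guess x s))"
proof -
  obtain j where j: "j \<in> children \<sigma>" "x \<in> \<Union>(range (C (\<sigma> @ [j])))"
    and step: "\<forall>\<^sub>\<infinity>s. guess_step x s \<sigma> = \<sigma> @ [j]"
    using eventually_guess_step_child[OF assms(3)] by blast
  from MOST_conjI[OF assms(2) step] have "\<forall>\<^sub>\<infinity>s. prefix (\<sigma> @ [j]) (guess x s)"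
  proof (rule MOST_mono)
    fix s
    assume s: "prefix \<sigma> (guess x s) \<and> guess_step x s \<sigma> = \<sigma> @ [j]"
    then have "\<sigma> \<noteq> guess x s"
      using guess_step_guess[OF assms(1), of x s] by auto
    then show "prefix (\<sigma> @ [j]) (guess x s)"
      using s guess_step_strict_prefix[OF assms(1), of \<sigma> x s] by (simp add: strict_prefix_def)
  qed
  with j show ?thesis
    by blast
qed

lemma frequently_guess_at_leaf:
  assumes "[] \<in> V" "\<forall>\<^sub>\<infinity>s. prefix \<sigma> (guess x s)"
    and leaf: "\<forall>i\<in>children \<sigma>. x \<notin> \<Union>(range (C (\<sigma> @ [i])))"
  shows "\<exists>\<^sub>\<infinity>s. guess x s = \<sigma>"
proof (rule ccontr)
  assume "\<not> (\<exists>\<^sub>\<infinity>s. guess x s = \<sigma>)"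
  then have "\<forall>\<^sub>\<infinity>s. prefix \<sigma> (guess x s) \<and> guess x s \<noteq> \<sigma>"
    using assms(2) by (simp add: MOST_conj_distrib)
  then have "\<forall>\<^sub>\<infinity>s. guess_step x s \<sigma> \<noteq> \<sigma>"
    by (rule MOST_mono) (use guess_step_strict_prefix[OF assms(1)] in \<open>auto simp: strict_prefix_def\<close>)
  then have moves: "\<forall>\<^sub>\<infinity>s. children \<sigma> \<noteq> {} \<and> child_min x \<sigma> s = child_min x \<sigma> (s - 1)"
    by (rule MOST_mono) (auto simp: guess_step_def split: if_splits)
  then have "\<forall>\<^sub>\<infinity>s::nat. children \<sigma> \<noteq> {}"
    by (rule MOST_mono) blast
  then have nonempty: "children \<sigma> \<noteq> {}"
    by simp
  from MOST_SucI[OF moves] have "\<forall>\<^sub>\<infinity>s. child_min x \<sigma> (Suc s) = child_min x \<sigma> s"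
    by (rule MOST_mono) simp
  then obtain M where M: "\<forall>\<^sub>\<infinity>s. child_min x \<sigma> s = M"
    using MOST_Suc_eq_imp_const by blast
  have "\<forall>\<^sub>\<infinity>s. M < meet_index (C (\<sigma> @ [i])) x s" if "i \<in> children \<sigma>" for i
    using that leaf meet_index_diverges[of "C (\<sigma> @ [i])", OF closed_C] unfolding children_def by blast
  then have "\<forall>\<^sub>\<infinity>s. \<forall>i\<in>children \<sigma>. M < meet_index (C (\<sigma> @ [i])) x s"
    by (intro eventually_ball_finite finite_children) blast
  then have "\<forall>\<^sub>\<infinity>s. M < child_min x \<sigma> s"
    by (rule MOST_mono) (simp add: child_min_def finite_children nonempty)
  with M have "\<forall>\<^sub>\<infinity>s::nat. False"
    by (rule MOST_rev_mp[OF _ MOST_mono]) auto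
  then show False
    by simp
qed

lemma guess_limit_below:
  assumes "[] \<in> V" "\<sigma> \<in> V" "x \<in> \<Union>(range (C \<sigma>))" "\<forall>\<^sub>\<infinity>s. prefix \<sigma> (guess x s)"
  shows "\<exists>\<sigma>'\<in>V. x \<in> \<Union>(range (C \<sigma>')) \<and> (\<forall>i. \<sigma>' @ [i] \<in> V \<longrightarrow> x \<notin> \<Union>(range (C (\<sigma>' @ [i])))) \<and>
    (\<forall>\<^sub>\<infinity>s. prefix \<sigma>' (guess x s)) \<and> (\<exists>\<^sub>\<infinity>s. guess x s = \<sigma>')"
  using assms(2-4)
proof (induction "card V - length \<sigma>" arbitrary: \<sigma> rule: less_induct)
  case less
  show ?case
  proof (cases "\<exists>i\<in>children \<sigma>. x \<in> \<Union>(range (C (\<sigma> @ [i])))")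
    case True
    then obtain j where j: "\<sigma> @ [j] \<in> V" "x \<in> \<Union>(range (C (\<sigma> @ [j])))"
      "\<forall>\<^sub>\<infinity>s. prefix (\<sigma> @ [j]) (guess x s)"
      using guess_descends[OF assms(1) less.prems(3)] unfolding children_def by blast
    have "card V - length (\<sigma> @ [j]) < card V - length \<sigma>"
      using length_less_card_prefix_closed[OF finite_V _ j(1)] prefix_closed by simp
    then show ?thesis
      using less.hyps j by blast
  next
    case False
    then show ?thesis
      using less.prems frequently_guess_at_leaf[OF assms(1) less.prems(3)] unfolding children_def by blast
  qed
qed

lemma guess_limit:
  assumes "[] \<in> V" "x \<in> \<Union>(range (C []))"
  shows "\<exists>\<sigma>\<in>V. x \<in> \<Union>(range (C \<sigma>)) \<and> (\<forall>i. \<sigma> @ [i] \<in> V \<longrightarrow> x \<notin> \<Union>(range (C (\<sigma> @ [i])))) \<and>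
    (\<forall>\<^sub>\<infinity>s. prefix \<sigma> (guess x s)) \<and> (\<exists>\<^sub>\<infinity>s. guess x s = \<sigma>)"
  using guess_limit_below[OF assms(1,1,2)] by simp

end

section \<open>Tracking the node of the forest\<close>

locale forest_cover =
  fixes F :: "nat list set" and U :: "nat list \<Rightarrow> (nat \<Rightarrow> 'x) set"
  assumes finite_F: "finite F"
    and open_U: "\<tau> \<in> F \<Longrightarrow> open_w (U \<tau>)"
    and cover_U: "\<Union>(U ` F) = UNIV"
begin

definition enter :: "(nat \<Rightarrow> 'x) \<Rightarrow> nat \<Rightarrow> nat list set \<Rightarrow> nat list option" where
  "enter x s S =
    (if \<exists>\<tau>\<in>S. cylinder x s \<subseteq> U \<tau> then Some (SOME \<tau>. \<tau> \<in> S \<and> cylinder x s \<subseteq> U \<tau>) else None)"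

definition candidates :: "nat list option \<Rightarrow> nat list set" where
  "candidates p = (case p of None \<Rightarrow> F | Some \<tau> \<Rightarrow> {\<tau> @ [i] | i. \<tau> @ [i] \<in> F})"

fun track :: "(nat \<Rightarrow> 'x) \<Rightarrow> nat \<Rightarrow> nat list option" where
  "track x 0 = None"
| "track x (Suc s) =
    (case enter x (Suc s) (candidates (track x s)) of None \<Rightarrow> track x s | Some \<tau> \<Rightarrow> Some \<tau>)"

declare track.simps(2) [simp del]

lemma enter_SomeD:
  assumes "enter x s S = Some \<tau>"
  shows "\<tau> \<in> S \<and> cylinder x s \<subseteq> U \<tau>"
proof -
  have "\<exists>\<tau>. \<tau> \<in> S \<and> cylinder x s \<subseteq> U \<tau>" "\<tau> = (SOME \<tau>. \<tau> \<in> S \<and> cylinder x s \<subseteq> U \<tau>)"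
    using assms unfolding enter_def by (auto split: if_splits)
  then show ?thesis
    using someI_ex[OF \<open>\<exists>\<tau>. \<tau> \<in> S \<and> cylinder x s \<subseteq> U \<tau>\<close>] by simp
qed

lemma enter_cong:
  assumes "\<eta> \<in> cylinder x s"
  shows "enter \<eta> s S = enter x s S"
  unfolding enter_def cylinder_eq[OF assms] ..

lemma candidates_subset: "candidates p \<subseteq> F"
  unfolding candidates_def by (auto split: option.splits)

lemma track_in: "track x s = Some \<tau> \<Longrightarrow> \<tau> \<in> F \<and> cylinder x s \<subseteq> U \<tau>"
proof (induction s arbitrary: \<tau>)
  case (Suc s)
  show ?case
  proof (cases "enter x (Suc s) (candidates (track x s))")
    case None
    then show ?thesis
      using Suc cylinder_antimono[of s "Suc s" x] by (auto simp: track.simps(2))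
  next
    case (Some \<tau>')
    then show ?thesis
      using Suc.prems enter_SomeD[OF Some] candidates_subset by (auto simp: track.simps(2))
  qed
qed simp

lemma track_Suc: "track x s = Some \<tau> \<Longrightarrow> \<exists>\<tau>'. track x (Suc s) = Some \<tau>' \<and> prefix \<tau> \<tau>'"
  using enter_SomeD[of x "Suc s" "candidates (Some \<tau>)"]
  by (auto simp: candidates_def track.simps(2) split: option.splits)

lemma track_cong: "\<eta> \<in> cylinder x s \<Longrightarrow> track \<eta> s = track x s"
proof (induction s)
  case (Suc s)
  then have "track \<eta> s = track x s"
    using cylinder_Suc by blast
  then show ?case
    by (simp only: track.simps enter_cong[OF Suc.prems])
qed simp

lemma track_Suc_not_None: "track x s \<noteq> None \<Longrightarrow> track x (Suc s) \<noteq> None"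
  using track_Suc[of x s] by (cases "track x s") auto

lemma eventually_track_Some: "\<forall>\<^sub>\<infinity>s. track x s \<noteq> None"
proof -
  obtain \<tau> where "\<tau> \<in> F" "x \<in> U \<tau>"
    using cover_U by blast
  then obtain n where n: "cylinder x n \<subseteq> U \<tau>"
    using open_U open_w_cylinder by blast
  have start: "track x (Suc n) \<noteq> None"
  proof (cases "track x n")
    case None
    have "cylinder x (Suc n) \<subseteq> U \<tau>"
      using n cylinder_antimono[of n "Suc n" x] by auto
    then have "enter x (Suc n) F \<noteq> None"
      using \<open>\<tau> \<in> F\<close> unfolding enter_def by auto
    then show ?thesis
      using None by (auto simp: candidates_def track.simps(2) split: option.splits)
  qed (simp add: track_Suc_not_None)
  have "track x s \<noteq> None" if "Suc n \<le> s" for s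
    using that by (induction s rule: dec_induct) (use start track_Suc_not_None in blast)+
  then show ?thesis
    unfolding MOST_nat_le by blast
qed

lemma track_limit: "\<exists>\<tau>\<in>F. (\<forall>\<^sub>\<infinity>s. track x s = Some \<tau>) \<and> x \<in> Util F U \<tau>"
proof -
  have "\<forall>\<^sub>\<infinity>s. the (track x s) \<in> F \<and> prefix (the (track x s)) (the (track x (Suc s)))"
    using eventually_track_Some[of x] by (rule MOST_mono) (use track_in track_Suc in fastforce)
  then obtain \<tau> where "\<forall>\<^sub>\<infinity>s. the (track x s) = \<tau>"
    using prefix_chain_eventually_const[OF finite_F, of "\<lambda>s. the (track x s)"]
    by (auto simp: MOST_conj_distrib)
  with eventually_track_Some[of x] have limit: "\<forall>\<^sub>\<infinity>s. track x s = Some \<tau>"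
    by (rule MOST_rev_mp[OF _ MOST_mono]) auto
  then obtain N where N: "\<And>s. s \<ge> N \<Longrightarrow> track x s = Some \<tau>"
    unfolding MOST_nat_le by blast
  have "\<tau> \<in> F" "x \<in> U \<tau>"
    using track_in[OF N[of N]] by auto
  moreover have "x \<notin> U (\<tau> @ [i])" if child: "\<tau> @ [i] \<in> F" for i
  proof
    assume "x \<in> U (\<tau> @ [i])"
    then obtain m where "cylinder x m \<subseteq> U (\<tau> @ [i])"
      using open_U[OF child] open_w_cylinder by blast
    then have "cylinder x (Suc (max m N)) \<subseteq> U (\<tau> @ [i])"
      using cylinder_antimono[of m "Suc (max m N)" x] by (meson max.cobounded1 le_Suc_eq order_trans)
    then have "enter x (Suc (max m N)) (candidates (Some \<tau>)) \<noteq> None"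
      using child unfolding enter_def candidates_def by auto
    then obtain \<tau>' where "track x (Suc (max m N)) = Some \<tau>'" "\<tau>' \<in> candidates (Some \<tau>)"
      using N[of "max m N"] enter_SomeD by (auto simp: track.simps(2) split: option.splits)
    moreover have "track x (Suc (max m N)) = Some \<tau>"
      using N[of "Suc (max m N)"] by simp
    ultimately show False
      unfolding candidates_def by auto
  qed
  ultimately show ?thesis
    using limit unfolding Util_def by blast
qed

end

section \<open>The reduction\<close>

locale h_reduction = forest_cover F U
  for F :: "nat list set" and U :: "nat list \<Rightarrow> (nat \<Rightarrow> 'x) set" +
  fixes \<delta> :: "'q::finite \<Rightarrow> 'x \<Rightarrow> 'q" and q0 :: 'q
    and V :: "nat list \<Rightarrow> nat list set" and C :: "nat list \<Rightarrow> nat list \<Rightarrow> nat \<Rightarrow> (nat \<Rightarrow> 'x) set"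
    and \<phi> :: "nat list \<Rightarrow> 'q set" and \<psi> :: "nat list \<Rightarrow> nat list \<Rightarrow> 'q set"
  assumes sigma2_tree: "\<tau> \<in> F \<Longrightarrow> sigma2_tree (V \<tau>) (C \<tau>)"
    and root_covers: "\<tau> \<in> F \<Longrightarrow> x \<in> Util F U \<tau> \<Longrightarrow> [] \<in> V \<tau> \<and> x \<in> \<Union>(range (C \<tau> []))"
    and \<phi>_CM: "\<tau> \<in> F \<Longrightarrow> \<phi> \<tau> \<in> CM \<delta> q0"
    and \<phi>_mono: "\<tau> \<in> F \<Longrightarrow> \<tau>' \<in> F \<Longrightarrow> prefix \<tau> \<tau>' \<Longrightarrow> le0 \<delta> (\<phi> \<tau>) (\<phi> \<tau>')"
    and \<psi>_cls0: "\<tau> \<in> F \<Longrightarrow> \<sigma> \<in> V \<tau> \<Longrightarrow> \<psi> \<tau> \<sigma> \<in> cls0 \<delta> q0 (\<phi> \<tau>)"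
    and \<psi>_antimono: "\<tau> \<in> F \<Longrightarrow> \<sigma> \<in> V \<tau> \<Longrightarrow> \<sigma>' \<in> V \<tau> \<Longrightarrow> prefix \<sigma> \<sigma>' \<Longrightarrow> \<psi> \<tau> \<sigma>' \<subseteq> \<psi> \<tau> \<sigma>"
begin

abbreviation guess :: "nat list \<Rightarrow> (nat \<Rightarrow> 'x) \<Rightarrow> nat \<Rightarrow> nat list" where
  "guess \<tau> \<equiv> sigma2_tree.guess (V \<tau>) (C \<tau>)"

lemma prefix_in_V:
  assumes "\<tau> \<in> F" "\<sigma> \<in> V \<tau>" "prefix \<rho> \<sigma>"
  shows "\<rho> \<in> V \<tau>"
  using sigma2_tree.prefix_closed[OF sigma2_tree[OF assms(1)] assms(2,3)] .

lemma guess_in_V: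
  assumes "\<tau> \<in> F" "V \<tau> \<noteq> {}"
  shows "guess \<tau> x s \<in> V \<tau>"
proof -
  obtain \<sigma> where "\<sigma> \<in> V \<tau>"
    using assms(2) by blast
  then have "[] \<in> V \<tau>"
    using prefix_in_V[OF assms(1)] by simp
  then show ?thesis
    by (rule sigma2_tree.guess_in[OF sigma2_tree[OF assms(1)]])
qed

text \<open>A node with an empty tree has an empty set Util F U \<tau>, so it is never the limit of the
  tracked node; while it is tracked, \<phi> \<tau> serves as target.\<close>

definition target :: "(nat \<Rightarrow> 'x) \<Rightarrow> nat \<Rightarrow> 'q set" where
  "target x s = (case track x s of None \<Rightarrow> {}
    | Some \<tau> \<Rightarrow> if V \<tau> = {} then \<phi> \<tau> else \<psi> \<tau> (guess \<tau> x s))"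

lemma target_in_cls0:
  assumes "track x s = Some \<tau>"
  shows "target x s \<in> cls0 \<delta> q0 (\<phi> \<tau>)"
proof -
  have "\<tau> \<in> F"
    using track_in[OF assms] by simp
  then show ?thesis
    using assms \<phi>_CM eq0_refl \<psi>_cls0 guess_in_V unfolding target_def cls0_def by auto
qed

definition common_guess :: "nat list \<Rightarrow> (nat \<Rightarrow> 'x) \<Rightarrow> nat \<Rightarrow> nat list" where
  "common_guess \<tau> x s = longest_common_prefix (guess \<tau> x s) (guess \<tau> x (Suc s))"

lemma common_guess_in_V:
  assumes "\<tau> \<in> F" "V \<tau> \<noteq> {}"
  shows "common_guess \<tau> x s \<in> V \<tau>"
  using prefix_in_V[OF assms(1) guess_in_V[OF assms]] longest_common_prefix_prefix1
  unfolding common_guess_def by blast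

lemma \<psi>_guess_subset_common:
  assumes "\<tau> \<in> F" "V \<tau> \<noteq> {}" "t = s \<or> t = Suc s"
  shows "\<psi> \<tau> (guess \<tau> x t) \<subseteq> \<psi> \<tau> (common_guess \<tau> x s)"
proof -
  have "prefix (common_guess \<tau> x s) (guess \<tau> x t)"
    using assms(3) longest_common_prefix_prefix1 longest_common_prefix_prefix2
    unfolding common_guess_def by blast
  then show ?thesis
    using \<psi>_antimono[OF assms(1) common_guess_in_V[OF assms(1,2)] guess_in_V[OF assms(1,2)]] by blast
qed

text \<open>While the tracked node stays the same, the walk from one target to the next stays inside
  the set assigned to the common prefix of the two guesses.\<close>

definition corridor :: "(nat \<Rightarrow> 'x) \<Rightarrow> nat \<Rightarrow> 'q set" where
  "corridor x s = (case track x s of None \<Rightarrow> UNIV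
    | Some \<tau> \<Rightarrow> if track x (Suc s) = Some \<tau> \<and> V \<tau> \<noteq> {} then \<psi> \<tau> (common_guess \<tau> x s) else UNIV)"

lemma target_le0_Suc:
  assumes "track x s = Some \<tau>" "track x (Suc s) = Some \<tau>'"
  shows "le0 \<delta> (target x s) (target x (Suc s))"
proof -
  have "le0 \<delta> (target x s) (\<phi> \<tau>)" "le0 \<delta> (\<phi> \<tau>') (target x (Suc s))"
    using target_in_cls0[OF assms(1)] target_in_cls0[OF assms(2)] unfolding cls0_def eq0_def by auto
  moreover have "le0 \<delta> (\<phi> \<tau>) (\<phi> \<tau>')"
    using track_Suc[OF assms(1)] assms(2) track_in[OF assms(1)] track_in[OF assms(2)] \<phi>_mono by auto
  ultimately show ?thesis
    using le0_trans by blast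
qed

lemma walk_within_common_guess:
  assumes "track x s = Some \<tau>" "track x (Suc s) = Some \<tau>" "V \<tau> \<noteq> {}"
    and "q \<in> target x s" "t \<in> target x (Suc s)"
  shows "\<exists>w. foldl \<delta> q w = t \<and> visited \<delta> q w = \<psi> \<tau> (common_guess \<tau> x s)"
proof -
  have \<tau>F: "\<tau> \<in> F"
    using track_in[OF assms(1)] by simp
  have "target x s = \<psi> \<tau> (guess \<tau> x s)" "target x (Suc s) = \<psi> \<tau> (guess \<tau> x (Suc s))"
    using assms(1-3) unfolding target_def by simp_all
  then have "q \<in> \<psi> \<tau> (common_guess \<tau> x s)" "t \<in> \<psi> \<tau> (common_guess \<tau> x s)"
    using assms(3-5) \<psi>_guess_subset_common[OF \<tau>F] by blast+
  moreover have "\<psi> \<tau> (common_guess \<tau> x s) \<in> CM \<delta> q0"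
    using \<psi>_cls0[OF \<tau>F common_guess_in_V[OF \<tau>F assms(3)]] unfolding cls0_def by simp
  ultimately show ?thesis
    using CM_connecting_word by blast
qed

lemma walk_exists:
  assumes "track x (Suc s) = Some \<tau>'" "(track x s = None \<and> q = q0) \<or> q \<in> target x s"
    and "t \<in> target x (Suc s)"
  shows "\<exists>w. foldl \<delta> q w = t \<and> visited \<delta> q w \<subseteq> corridor x s"
proof (cases "track x s")
  case None
  then have "q = q0" "corridor x s = UNIV"
    using assms(2) by (auto simp: target_def corridor_def)
  moreover have "target x (Suc s) \<in> CM \<delta> q0"
    using target_in_cls0[OF assms(1)] unfolding cls0_def by simp
  ultimately show ?thesis
    using CM_reachable_from_initial[OF _ assms(3)] by simp
next
  case (Some \<tau>)
  then have q: "q \<in> target x s"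
    using assms(2) by auto
  show ?thesis
  proof (cases "\<tau>' = \<tau> \<and> V \<tau> \<noteq> {}")
    case True
    then show ?thesis
      using walk_within_common_guess[OF Some _ _ q assms(3)] Some assms(1)
      unfolding corridor_def by auto
  next
    case False
    then have "corridor x s = UNIV"
      using Some assms(1) unfolding corridor_def by auto
    moreover have "target x s \<in> CM \<delta> q0"
      using target_in_cls0[OF Some] unfolding cls0_def by simp
    ultimately show ?thesis
      using le0_connecting_word[OF _ target_le0_Suc[OF Some assms(1)] q assms(3)] by simp
  qed
qed

definition segment :: "(nat \<Rightarrow> 'x) \<Rightarrow> nat \<Rightarrow> 'q \<Rightarrow> 'x list" where
  "segment x s q =
    (if track x (Suc s) = None then []
     else let t = (SOME t. t \<in> target x (Suc s)) in
       (SOME w. foldl \<delta> q w = t \<and> visited \<delta> q w \<subseteq> corridor x s) @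
       (SOME w. w \<noteq> [] \<and> foldl \<delta> t w = t \<and> visited \<delta> t w = target x (Suc s)))"

lemma segment_spec:
  assumes "track x (Suc s) \<noteq> None" "(track x s = None \<and> q = q0) \<or> q \<in> target x s"
  shows "segment x s q \<noteq> [] \<and> foldl \<delta> q (segment x s q) \<in> target x (Suc s) \<and>
    target x (Suc s) \<subseteq> visited \<delta> q (segment x s q) \<and>
    visited \<delta> q (segment x s q) \<subseteq> corridor x s \<union> target x (Suc s)"
proof -
  obtain \<tau>' where \<tau>': "track x (Suc s) = Some \<tau>'"
    using assms(1) by blast
  have T: "target x (Suc s) \<in> CM \<delta> q0"
    using target_in_cls0[OF \<tau>'] unfolding cls0_def by simp
  define t where "t = (SOME t. t \<in> target x (Suc s))"
  have t: "t \<in> target x (Suc s)"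
    unfolding t_def using CM_nonempty[OF T] by (simp add: some_in_eq)
  define walk where "walk = (SOME w. foldl \<delta> q w = t \<and> visited \<delta> q w \<subseteq> corridor x s)"
  have walk: "foldl \<delta> q walk = t" "visited \<delta> q walk \<subseteq> corridor x s"
    using someI_ex[OF walk_exists[OF \<tau>' assms(2) t]] unfolding walk_def by simp_all
  define tour where "tour = (SOME w. w \<noteq> [] \<and> foldl \<delta> t w = t \<and> visited \<delta> t w = target x (Suc s))"
  have tour: "tour \<noteq> []" "foldl \<delta> t tour = t" "visited \<delta> t tour = target x (Suc s)"
    using someI_ex[OF CM_connecting_word[OF T t t]] unfolding tour_def by simp_all
  have "segment x s q = walk @ tour"
    unfolding segment_def walk_def tour_def t_def using \<tau>' by (simp add: Let_def)
  then show ?thesis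
    using walk tour t by (auto simp: visited_append)
qed

fun word :: "(nat \<Rightarrow> 'x) \<Rightarrow> nat \<Rightarrow> 'x list" where
  "word x 0 = []"
| "word x (Suc s) = word x s @ segment x s (foldl \<delta> q0 (word x s))"

abbreviation state :: "(nat \<Rightarrow> 'x) \<Rightarrow> nat \<Rightarrow> 'q" where
  "state x s \<equiv> foldl \<delta> q0 (word x s)"

lemma state_in_target: "(track x s = None \<and> state x s = q0) \<or> state x s \<in> target x s"
proof (induction s)
  case 0
  then show ?case by simp
next
  case (Suc s)
  show ?case
  proof (cases "track x (Suc s)")
    case None
    then have "track x s = None"
      using track_Suc_not_None by blast
    moreover have "segment x s q = []" for q
      using None unfolding segment_def by simp
    ultimately show ?thesis
      using Suc None by (simp add: target_def)
  next
    case (Some \<tau>)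
    then show ?thesis
      using segment_spec[OF _ Suc] by simp
  qed
qed

lemma segment_spec_state:
  assumes "track x (Suc s) \<noteq> None"
  shows "segment x s (state x s) \<noteq> [] \<and> state x (Suc s) \<in> target x (Suc s) \<and>
    target x (Suc s) \<subseteq> visited \<delta> (state x s) (segment x s (state x s)) \<and>
    visited \<delta> (state x s) (segment x s (state x s)) \<subseteq> corridor x s \<union> target x (Suc s)"
  using segment_spec[OF assms state_in_target] by simp

lemma target_cong:
  assumes "\<eta> \<in> cylinder x s"
  shows "target \<eta> s = target x s"
proof (cases "track x s")
  case (Some \<tau>)
  then have "\<tau> \<in> F"
    using track_in by blast
  then show ?thesis
    using Some track_cong[OF assms] sigma2_tree.guess_cong[OF sigma2_tree assms]
    unfolding target_def by simp
qed (simp add: target_def track_cong[OF assms])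

lemma corridor_cong:
  assumes "\<eta> \<in> cylinder x (Suc s)"
  shows "corridor \<eta> s = corridor x s"
proof (cases "track x s")
  case (Some \<tau>)
  have "\<eta> \<in> cylinder x s"
    using cylinder_Suc[OF assms] .
  moreover have "\<tau> \<in> F"
    using Some track_in by blast
  ultimately show ?thesis
    using Some assms track_cong sigma2_tree.guess_cong[OF sigma2_tree]
    unfolding corridor_def common_guess_def by simp
qed (simp add: corridor_def track_cong[OF cylinder_Suc[OF assms]])

lemma segment_cong:
  assumes "\<eta> \<in> cylinder x (Suc s)"
  shows "segment \<eta> s q = segment x s q"
  unfolding segment_def track_cong[OF assms] target_cong[OF assms] corridor_cong[OF assms] ..

lemma word_cong: "\<eta> \<in> cylinder x s \<Longrightarrow> word \<eta> s = word x s"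
proof (induction s)
  case (Suc s)
  then have "word \<eta> s = word x s"
    using cylinder_Suc by blast
  then show ?case
    using segment_cong[OF Suc.prems] by simp
qed simp

lemma length_word_unbounded: "\<exists>s. i < length (word x s)"
proof -
  obtain N where N: "\<And>s. s \<ge> N \<Longrightarrow> track x s \<noteq> None"
    using eventually_track_Some[of x] unfolding MOST_nat_le by blast
  have "k \<le> length (word x (N + k))" for k
  proof (induction k)
    case (Suc k)
    have "segment x (N + k) (state x (N + k)) \<noteq> []"
      using segment_spec_state N[of "Suc (N + k)"] by simp
    then have "0 < length (segment x (N + k) (state x (N + k)))"
      by simp
    moreover have "length (word x (N + Suc k)) =
        length (word x (N + k)) + length (segment x (N + k) (state x (N + k)))"
      by simp
    ultimately show ?case
      using Suc.IH by linarith
  qed simp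
  then show ?thesis
    by (metis Suc_le_lessD)
qed

definition reduction :: "(nat \<Rightarrow> 'x) \<Rightarrow> nat \<Rightarrow> 'x" where
  "reduction x = limit_word (word x)"

lemma cont_w_reduction: "cont_w reduction"
  unfolding reduction_def
  using cont_w_limit_word[of word] length_word_unbounded word_cong by simp

lemma fM_reduction_iff:
  "q \<in> fM \<delta> q0 (reduction x) \<longleftrightarrow>
    (\<exists>\<^sub>\<infinity>s. q \<in> visited \<delta> (state x s) (segment x s (state x s)))"
  unfolding reduction_def using fM_limit_word[of "word x"] length_word_unbounded by simp

lemma eventually_segment_within:
  assumes \<tau>F: "\<tau> \<in> F" and \<sigma>: "\<sigma> \<in> V \<tau>" and "\<forall>\<^sub>\<infinity>s. track x s = Some \<tau>"
    and "\<forall>\<^sub>\<infinity>s. prefix \<sigma> (guess \<tau> x s)"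
  shows "\<forall>\<^sub>\<infinity>s. visited \<delta> (state x s) (segment x s (state x s)) \<subseteq> \<psi> \<tau> \<sigma>"
proof -
  have V: "V \<tau> \<noteq> {}"
    using \<sigma> by blast
  have "\<forall>\<^sub>\<infinity>s. track x s = Some \<tau> \<and> track x (Suc s) = Some \<tau> \<and>
      prefix \<sigma> (guess \<tau> x s) \<and> prefix \<sigma> (guess \<tau> x (Suc s))"
    using assms(3,4) MOST_SucI[OF assms(3)] MOST_SucI[OF assms(4)] by (simp add: MOST_conj_distrib)
  then show ?thesis
  proof (rule MOST_mono)
    fix s
    assume s: "track x s = Some \<tau> \<and> track x (Suc s) = Some \<tau> \<and>
      prefix \<sigma> (guess \<tau> x s) \<and> prefix \<sigma> (guess \<tau> x (Suc s))"
    then have "prefix \<sigma> (common_guess \<tau> x s)"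
      unfolding common_guess_def by (blast intro: longest_common_prefix_max_prefix)
    then have "corridor x s \<subseteq> \<psi> \<tau> \<sigma>"
      using s V \<psi>_antimono[OF \<tau>F \<sigma> common_guess_in_V[OF \<tau>F V]] unfolding corridor_def by simp
    moreover have "target x (Suc s) \<subseteq> \<psi> \<tau> \<sigma>"
      using s V \<psi>_antimono[OF \<tau>F \<sigma> guess_in_V[OF \<tau>F V]] unfolding target_def by simp
    ultimately show "visited \<delta> (state x s) (segment x s (state x s)) \<subseteq> \<psi> \<tau> \<sigma>"
      using segment_spec_state[of x s] s by auto
  qed
qed

lemma frequently_segment_covers:
  assumes "V \<tau> \<noteq> {}" "\<forall>\<^sub>\<infinity>s. track x s = Some \<tau>" "\<exists>\<^sub>\<infinity>s. guess \<tau> x s = \<sigma>"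
  shows "\<exists>\<^sub>\<infinity>s. \<psi> \<tau> \<sigma> \<subseteq> visited \<delta> (state x s) (segment x s (state x s))"
proof -
  have "\<exists>\<^sub>\<infinity>s. guess \<tau> x (Suc s) = \<sigma> \<and> track x (Suc s) = Some \<tau>"
    using INFM_conjI[OF iffD2[OF INFM_Suc_iff assms(3)] MOST_SucI[OF assms(2)]] .
  then show ?thesis
  proof (rule INFM_mono)
    fix s
    assume s: "guess \<tau> x (Suc s) = \<sigma> \<and> track x (Suc s) = Some \<tau>"
    then have "target x (Suc s) = \<psi> \<tau> \<sigma>"
      using assms(1) unfolding target_def by simp
    then show "\<psi> \<tau> \<sigma> \<subseteq> visited \<delta> (state x s) (segment x s (state x s))"
      using segment_spec_state[of x s] s by simp
  qed
qed

lemma fM_reduction: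
  assumes "\<tau> \<in> F" "\<sigma> \<in> V \<tau>" "\<forall>\<^sub>\<infinity>s. track x s = Some \<tau>"
    and "\<forall>\<^sub>\<infinity>s. prefix \<sigma> (guess \<tau> x s)" "\<exists>\<^sub>\<infinity>s. guess \<tau> x s = \<sigma>"
  shows "fM \<delta> q0 (reduction x) = \<psi> \<tau> \<sigma>"
proof
  show "fM \<delta> q0 (reduction x) \<subseteq> \<psi> \<tau> \<sigma>"
  proof
    fix q
    assume "q \<in> fM \<delta> q0 (reduction x)"
    with eventually_segment_within[OF assms(1-4)]
    have "\<exists>\<^sub>\<infinity>s. q \<in> visited \<delta> (state x s) (segment x s (state x s)) \<and>
        visited \<delta> (state x s) (segment x s (state x s)) \<subseteq> \<psi> \<tau> \<sigma>"
      by (simp add: fM_reduction_iff INFM_conjI)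
    then show "q \<in> \<psi> \<tau> \<sigma>"
      by (auto dest: INFM_EX)
  qed
  show "\<psi> \<tau> \<sigma> \<subseteq> fM \<delta> q0 (reduction x)"
  proof
    fix q
    assume "q \<in> \<psi> \<tau> \<sigma>"
    have "V \<tau> \<noteq> {}"
      using assms(2) by blast
    from frequently_segment_covers[OF this assms(3,5)]
    have "\<exists>\<^sub>\<infinity>s. q \<in> visited \<delta> (state x s) (segment x s (state x s))"
      by (rule INFM_mono) (use \<open>q \<in> \<psi> \<tau> \<sigma>\<close> in blast)
    then show "q \<in> fM \<delta> q0 (reduction x)"
      by (simp add: fM_reduction_iff)
  qed
qed

theorem reduction_reaches_leaf:
  "\<exists>\<tau>\<in>F. \<exists>\<sigma>\<in>V \<tau>. x \<in> Util F U \<tau> \<and> x \<in> \<Union>(range (C \<tau> \<sigma>)) \<and>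
    (\<forall>i. \<sigma> @ [i] \<in> V \<tau> \<longrightarrow> x \<notin> \<Union>(range (C \<tau> (\<sigma> @ [i])))) \<and>
    fM \<delta> q0 (reduction x) = \<psi> \<tau> \<sigma>"
proof -
  obtain \<tau> where \<tau>: "\<tau> \<in> F" "\<forall>\<^sub>\<infinity>s. track x s = Some \<tau>" "x \<in> Util F U \<tau>"
    using track_limit by blast
  then obtain \<sigma> where "\<sigma> \<in> V \<tau>" "x \<in> \<Union>(range (C \<tau> \<sigma>))"
    "\<forall>i. \<sigma> @ [i] \<in> V \<tau> \<longrightarrow> x \<notin> \<Union>(range (C \<tau> (\<sigma> @ [i])))"
    "\<forall>\<^sub>\<infinity>s. prefix \<sigma> (guess \<tau> x s)" "\<exists>\<^sub>\<infinity>s. guess \<tau> x s = \<sigma>"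
    using sigma2_tree.guess_limit[OF sigma2_tree[OF \<tau>(1)]] root_covers[OF \<tau>(1,3)] by blast
  then show ?thesis
    using \<tau> fM_reduction[of \<tau> \<sigma> x] by blast
qed

end

lemma antimono_along_prefix:
  assumes nested: "\<And>\<sigma> i. \<sigma> @ [i] \<in> V \<Longrightarrow> W (\<sigma> @ [i]) \<subseteq> W \<sigma>"
    and closed: "\<And>\<rho> z. \<rho> @ z \<in> V \<Longrightarrow> \<rho> \<in> V"
  shows "\<sigma>' \<in> V \<Longrightarrow> prefix \<sigma> \<sigma>' \<Longrightarrow> W \<sigma>' \<subseteq> W \<sigma>"
proof (induction \<sigma>' rule: rev_induct)
  case (snoc a \<rho>)
  show ?case
  proof (cases "\<sigma> = \<rho> @ [a]")
    case False
    then have "prefix \<sigma> \<rho>"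
      using snoc.prems(2) by simp
    then have "W \<rho> \<subseteq> W \<sigma>"
      using snoc.IH closed snoc.prems(1) by blast
    then show ?thesis
      using nested[OF snoc.prems(1)] by blast
  qed simp
qed simp

lemma h_red_witnesses:
  assumes "h_red F c \<delta> q0 A"
  obtains \<phi> \<psi> where "\<And>\<tau>. \<tau> \<in> F \<Longrightarrow> \<phi> \<tau> \<in> CM \<delta> q0"
    and "\<And>\<tau> \<tau>'. \<tau> \<in> F \<Longrightarrow> \<tau>' \<in> F \<Longrightarrow> prefix \<tau> \<tau>' \<Longrightarrow> le0 \<delta> (\<phi> \<tau>) (\<phi> \<tau>')"
    and "\<And>\<tau> \<sigma>. \<tau> \<in> F \<Longrightarrow> \<sigma> \<in> fst (c \<tau>) \<Longrightarrow> \<psi> \<tau> \<sigma> \<in> cls0 \<delta> q0 (\<phi> \<tau>)"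
    and "\<And>\<tau> \<sigma> \<sigma>'. \<tau> \<in> F \<Longrightarrow> \<sigma> \<in> fst (c \<tau>) \<Longrightarrow> \<sigma>' \<in> fst (c \<tau>) \<Longrightarrow> prefix \<sigma> \<sigma>' \<Longrightarrow>
      \<psi> \<tau> \<sigma>' \<subseteq> \<psi> \<tau> \<sigma>"
    and "\<And>\<tau> \<sigma>. \<tau> \<in> F \<Longrightarrow> \<sigma> \<in> fst (c \<tau>) \<Longrightarrow> snd (c \<tau>) \<sigma> = A (\<psi> \<tau> \<sigma>)"
proof -
  obtain \<phi> where \<phi>: "\<forall>\<tau>\<in>F. \<phi> \<tau> \<in> CM \<delta> q0" "\<forall>\<tau>\<in>F. \<forall>\<tau>'\<in>F. prefix \<tau> \<tau>' \<longrightarrow> le0 \<delta> (\<phi> \<tau>) (\<phi> \<tau>')"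
    and ex: "\<forall>\<tau>\<in>F. \<exists>\<psi>.
      (\<forall>\<sigma>\<in>fst (c \<tau>). \<psi> \<sigma> \<in> cls0 \<delta> q0 (\<phi> \<tau>)) \<and>
      (\<forall>\<sigma>\<in>fst (c \<tau>). \<forall>\<sigma>'\<in>fst (c \<tau>). prefix \<sigma> \<sigma>' \<longrightarrow> \<psi> \<sigma> \<supseteq> \<psi> \<sigma>') \<and>
      (\<forall>\<sigma>\<in>fst (c \<tau>). snd (c \<tau>) \<sigma> = A (\<psi> \<sigma>))"
    using assms unfolding h_red_def by blast
  obtain \<psi> where "\<forall>\<tau>\<in>F.
      (\<forall>\<sigma>\<in>fst (c \<tau>). \<psi> \<tau> \<sigma> \<in> cls0 \<delta> q0 (\<phi> \<tau>)) \<and>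
      (\<forall>\<sigma>\<in>fst (c \<tau>). \<forall>\<sigma>'\<in>fst (c \<tau>). prefix \<sigma> \<sigma>' \<longrightarrow> \<psi> \<tau> \<sigma> \<supseteq> \<psi> \<tau> \<sigma>') \<and>
      (\<forall>\<sigma>\<in>fst (c \<tau>). snd (c \<tau>) \<sigma> = A (\<psi> \<tau> \<sigma>))"
    using bchoice[OF ex] by blast
  with \<phi> show ?thesis
    by (intro that[of \<phi> \<psi>]) auto
qed

lemma F_familyD:
  fixes W :: "nat list \<Rightarrow> nat list \<Rightarrow> (nat \<Rightarrow> 'x) set"
  assumes "F_family F c U W" "\<tau> \<in> F"
  shows "open_w (U \<tau>)"
    and "\<exists>Bs. \<forall>\<sigma>\<in>fst (c \<tau>). Bs \<sigma> \<in> Sigma02 \<and> W \<tau> \<sigma> = Util F U \<tau> \<inter> Bs \<sigma>"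
    and "\<sigma> \<in> fst (c \<tau>) \<Longrightarrow> \<sigma> @ [i] \<in> fst (c \<tau>) \<Longrightarrow> W \<tau> (\<sigma> @ [i]) \<subseteq> W \<tau> \<sigma>"
    and "\<Union>(W \<tau> ` fst (c \<tau>)) = Util F U \<tau>"
proof -
  have "\<forall>\<tau>\<in>F. \<exists>Bs :: nat list \<Rightarrow> (nat \<Rightarrow> 'x) set.
      (\<forall>\<sigma>\<in>fst (c \<tau>). Bs \<sigma> \<in> Sigma02 \<and> W \<tau> \<sigma> = Util F U \<tau> \<inter> Bs \<sigma>) \<and>
      (\<forall>\<sigma>\<in>fst (c \<tau>). \<forall>i. \<sigma> @ [i] \<in> fst (c \<tau>) \<longrightarrow> W \<tau> (\<sigma> @ [i]) \<subseteq> W \<tau> \<sigma>) \<and>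
      \<Union>(W \<tau> ` fst (c \<tau>)) = Util F U \<tau>"
    using assms(1) unfolding F_family_def by (elim conjE) assumption
  from bspec[OF this assms(2)] obtain Bs :: "nat list \<Rightarrow> (nat \<Rightarrow> 'x) set" where
    "\<forall>\<sigma>\<in>fst (c \<tau>). Bs \<sigma> \<in> Sigma02 \<and> W \<tau> \<sigma> = Util F U \<tau> \<inter> Bs \<sigma>"
    "\<forall>\<sigma>\<in>fst (c \<tau>). \<forall>i. \<sigma> @ [i] \<in> fst (c \<tau>) \<longrightarrow> W \<tau> (\<sigma> @ [i]) \<subseteq> W \<tau> \<sigma>"
    "\<Union>(W \<tau> ` fst (c \<tau>)) = Util F U \<tau>"
    by blast
  then show "\<exists>Bs. \<forall>\<sigma>\<in>fst (c \<tau>). Bs \<sigma> \<in> Sigma02 \<and> W \<tau> \<sigma> = Util F U \<tau> \<inter> Bs \<sigma>"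
    and "\<sigma> \<in> fst (c \<tau>) \<Longrightarrow> \<sigma> @ [i] \<in> fst (c \<tau>) \<Longrightarrow> W \<tau> (\<sigma> @ [i]) \<subseteq> W \<tau> \<sigma>"
    and "\<Union>(W \<tau> ` fst (c \<tau>)) = Util F U \<tau>"
    by blast+
  have "\<forall>\<tau>\<in>F. open_w (U \<tau>)"
    using assms(1) unfolding F_family_def by (elim conjE) assumption
  then show "open_w (U \<tau>)"
    using assms(2) by blast
qed

lemma F_family_closed_witnesses:
  fixes W :: "nat list \<Rightarrow> nat list \<Rightarrow> (nat \<Rightarrow> 'x) set"
  assumes "F_family F c U W"
  obtains C :: "nat list \<Rightarrow> nat list \<Rightarrow> nat \<Rightarrow> (nat \<Rightarrow> 'x) set"
  where "\<And>\<tau> \<sigma> n. \<tau> \<in> F \<Longrightarrow> \<sigma> \<in> fst (c \<tau>) \<Longrightarrow> closed_w (C \<tau> \<sigma> n)"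
    and "\<And>\<tau> \<sigma>. \<tau> \<in> F \<Longrightarrow> \<sigma> \<in> fst (c \<tau>) \<Longrightarrow> W \<tau> \<sigma> = Util F U \<tau> \<inter> \<Union>(range (C \<tau> \<sigma>))"
proof -
  have "\<exists>C\<tau> :: nat list \<Rightarrow> nat \<Rightarrow> (nat \<Rightarrow> 'x) set. \<forall>\<sigma>\<in>fst (c \<tau>). (\<forall>n. closed_w (C\<tau> \<sigma> n)) \<and> W \<tau> \<sigma> = Util F U \<tau> \<inter> \<Union>(range (C\<tau> \<sigma>))"
    if \<tau>F: "\<tau> \<in> F" for \<tau>
  proof -
    obtain Bs where Bs: "\<forall>\<sigma>\<in>fst (c \<tau>). Bs \<sigma> \<in> Sigma02 \<and> W \<tau> \<sigma> = Util F U \<tau> \<inter> Bs \<sigma>"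
      using F_familyD(2)[OF assms \<tau>F] by blast
    have "\<exists>Cs :: nat \<Rightarrow> (nat \<Rightarrow> 'x) set. (\<forall>n. closed_w (Cs n)) \<and> W \<tau> \<sigma> = Util F U \<tau> \<inter> \<Union>(range Cs)"
      if "\<sigma> \<in> fst (c \<tau>)" for \<sigma>
    proof -
      have "Bs \<sigma> \<in> Sigma02" "W \<tau> \<sigma> = Util F U \<tau> \<inter> Bs \<sigma>"
        using Bs that by simp_all
      then obtain Cs :: "nat \<Rightarrow> (nat \<Rightarrow> 'x) set" where "\<forall>n. closed_w (Cs n)" "Bs \<sigma> = \<Union>(range Cs)"
        unfolding Sigma02_def mem_Collect_eq by (elim exE conjE)
      then show ?thesis
        using \<open>W \<tau> \<sigma> = Util F U \<tau> \<inter> Bs \<sigma>\<close> by (intro exI[of _ Cs]) simp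
    qed
    then show ?thesis
      by (intro bchoice ballI)
  qed
  then have "\<forall>\<tau>\<in>F. \<exists>C\<tau> :: nat list \<Rightarrow> nat \<Rightarrow> (nat \<Rightarrow> 'x) set. \<forall>\<sigma>\<in>fst (c \<tau>).
      (\<forall>n. closed_w (C\<tau> \<sigma> n)) \<and> W \<tau> \<sigma> = Util F U \<tau> \<inter> \<Union>(range (C\<tau> \<sigma>))"
    by blast
  from bchoice[OF this] obtain C :: "nat list \<Rightarrow> nat list \<Rightarrow> nat \<Rightarrow> (nat \<Rightarrow> 'x) set" where "\<forall>\<tau>\<in>F. \<forall>\<sigma>\<in>fst (c \<tau>). (\<forall>n. closed_w (C \<tau> \<sigma> n)) \<and>
      W \<tau> \<sigma> = Util F U \<tau> \<inter> \<Union>(range (C \<tau> \<sigma>))"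
    by blast
  then show ?thesis
    by (intro that[of C]) auto
qed

lemma F_family_root:
  fixes W :: "nat list \<Rightarrow> nat list \<Rightarrow> (nat \<Rightarrow> 'x) set"
  assumes family: "F_family F c U W" and \<tau>F: "\<tau> \<in> F" and "x \<in> Util F U \<tau>"
    and tree: "\<And>\<rho> z. \<rho> @ z \<in> fst (c \<tau>) \<Longrightarrow> \<rho> \<in> fst (c \<tau>)"
  shows "[] \<in> fst (c \<tau>) \<and> x \<in> W \<tau> []"
proof -
  obtain \<sigma> where \<sigma>: "\<sigma> \<in> fst (c \<tau>)" "x \<in> W \<tau> \<sigma>"
    using F_familyD(4)[OF family \<tau>F] assms(3) by blast
  have nested: "W \<tau> (\<rho> @ [i]) \<subseteq> W \<tau> \<rho>" if "\<rho> @ [i] \<in> fst (c \<tau>)" for \<rho> i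
    using F_familyD(3)[OF family \<tau>F] tree[OF that] that by blast
  have "W \<tau> \<sigma> \<subseteq> W \<tau> []"
    using antimono_along_prefix[of "fst (c \<tau>)" "W \<tau>", OF nested tree \<sigma>(1)] by simp
  then show ?thesis
    using \<sigma> tree[of "[]"] by auto
qed

lemma forest_cover_of_F_family:
  fixes W :: "nat list \<Rightarrow> nat list \<Rightarrow> (nat \<Rightarrow> 'x) set"
  assumes "is_forest F" "F_family F c U W"
  shows "forest_cover F U"
proof
  show "finite F"
    using assms(1) unfolding is_forest_def by blast
  show "open_w (U \<tau>)" if "\<tau> \<in> F" for \<tau>
    using F_familyD(1)[OF assms(2) that] .
  show "\<Union>(U ` F) = UNIV"
    using assms(2) unfolding F_family_def by blast
qed

lemma sigma2_tree_of_is_tree: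
  assumes "is_tree V" "\<And>\<sigma> n. \<sigma> \<in> V \<Longrightarrow> closed_w (C \<sigma> n)"
  shows "sigma2_tree V C"
  using assms unfolding is_tree_def by unfold_locales (auto simp: prefix_def)

lemma SigmaF_witnesses:
  fixes B :: "(nat \<Rightarrow> 'x) \<Rightarrow> nat"
  assumes "B \<in> SigmaF k F c" "labeled_forest k F c"
  obtains U and C :: "nat list \<Rightarrow> nat list \<Rightarrow> nat \<Rightarrow> (nat \<Rightarrow> 'x) set"
  where "forest_cover F U"
    and "\<And>\<tau>. \<tau> \<in> F \<Longrightarrow> sigma2_tree (fst (c \<tau>)) (C \<tau>)"
    and "\<And>\<tau> x. \<tau> \<in> F \<Longrightarrow> x \<in> Util F U \<tau> \<Longrightarrow> [] \<in> fst (c \<tau>) \<and> x \<in> \<Union>(range (C \<tau> []))"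
    and "\<And>\<tau> \<sigma> x. \<tau> \<in> F \<Longrightarrow> \<sigma> \<in> fst (c \<tau>) \<Longrightarrow> x \<in> Util F U \<tau> \<Longrightarrow> x \<in> \<Union>(range (C \<tau> \<sigma>)) \<Longrightarrow>
      (\<forall>i. \<sigma> @ [i] \<in> fst (c \<tau>) \<longrightarrow> x \<notin> \<Union>(range (C \<tau> (\<sigma> @ [i])))) \<Longrightarrow> B x = snd (c \<tau>) \<sigma>"
proof -
  obtain U and W :: "nat list \<Rightarrow> nat list \<Rightarrow> (nat \<Rightarrow> 'x) set"
    where family: "F_family F c U W" and det: "determines F c W B"
    using assms(1) unfolding SigmaF_def by blast
  obtain C :: "nat list \<Rightarrow> nat list \<Rightarrow> nat \<Rightarrow> (nat \<Rightarrow> 'x) set"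
    where closed: "\<And>\<tau> \<sigma> n. \<tau> \<in> F \<Longrightarrow> \<sigma> \<in> fst (c \<tau>) \<Longrightarrow> closed_w (C \<tau> \<sigma> n)"
    and W: "\<And>\<tau> \<sigma>. \<tau> \<in> F \<Longrightarrow> \<sigma> \<in> fst (c \<tau>) \<Longrightarrow> W \<tau> \<sigma> = Util F U \<tau> \<inter> \<Union>(range (C \<tau> \<sigma>))"
    using F_family_closed_witnesses[OF family] by blast
  have trees: "is_tree (fst (c \<tau>))" if "\<tau> \<in> F" for \<tau>
    using assms(2) that unfolding labeled_forest_def by blast
  show ?thesis
  proof
    show "forest_cover F U"
      using forest_cover_of_F_family[OF _ family] assms(2) unfolding labeled_forest_def by blast
    show "sigma2_tree (fst (c \<tau>)) (C \<tau>)" if "\<tau> \<in> F" for \<tau>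
      using sigma2_tree_of_is_tree[OF trees[OF that] closed[OF that]] .
    show "[] \<in> fst (c \<tau>) \<and> x \<in> \<Union>(range (C \<tau> []))" if "\<tau> \<in> F" "x \<in> Util F U \<tau>" for \<tau> x
    proof -
      have "[] \<in> fst (c \<tau>) \<and> x \<in> W \<tau> []"
        by (rule F_family_root[OF family that]) (use trees[OF that(1)] in \<open>auto simp: is_tree_def\<close>)
      then show ?thesis
        using W[OF that(1)] by auto
    qed
    show "B x = snd (c \<tau>) \<sigma>"
      if "\<tau> \<in> F" "\<sigma> \<in> fst (c \<tau>)" "x \<in> Util F U \<tau>" "x \<in> \<Union>(range (C \<tau> \<sigma>))"
        "\<forall>i. \<sigma> @ [i] \<in> fst (c \<tau>) \<longrightarrow> x \<notin> \<Union>(range (C \<tau> (\<sigma> @ [i])))" for \<tau> \<sigma> x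
    proof -
      have "x \<in> W \<tau> \<sigma> - \<Union>{W \<tau> (\<sigma> @ [i]) | i. \<sigma> @ [i] \<in> fst (c \<tau>)}"
        using that W[OF that(1)] by auto
      then show ?thesis
        using det that(1,2) unfolding determines_def by blast
    qed
  qed
qed

lemma h_reduction_from_hypotheses:
  fixes \<delta> :: "'q::finite \<Rightarrow> 'x \<Rightarrow> 'q" and B :: "(nat \<Rightarrow> 'x) \<Rightarrow> nat"
  assumes "labeled_forest k F c" "h_red F c \<delta> q0 A" "B \<in> SigmaF k F c"
  obtains U C \<phi> \<psi> where "h_reduction F U \<delta> q0 (\<lambda>\<tau>. fst (c \<tau>)) C \<phi> \<psi>"
    and "\<And>\<tau> \<sigma> x. \<tau> \<in> F \<Longrightarrow> \<sigma> \<in> fst (c \<tau>) \<Longrightarrow> x \<in> Util F U \<tau> \<Longrightarrow> x \<in> \<Union>(range (C \<tau> \<sigma>)) \<Longrightarrow>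
      (\<forall>i. \<sigma> @ [i] \<in> fst (c \<tau>) \<longrightarrow> x \<notin> \<Union>(range (C \<tau> (\<sigma> @ [i])))) \<Longrightarrow> B x = A (\<psi> \<tau> \<sigma>)"
proof -
  obtain \<phi> \<psi> where \<phi>\<psi>: "\<And>\<tau>. \<tau> \<in> F \<Longrightarrow> \<phi> \<tau> \<in> CM \<delta> q0"
    "\<And>\<tau> \<tau>'. \<tau> \<in> F \<Longrightarrow> \<tau>' \<in> F \<Longrightarrow> prefix \<tau> \<tau>' \<Longrightarrow> le0 \<delta> (\<phi> \<tau>) (\<phi> \<tau>')"
    "\<And>\<tau> \<sigma>. \<tau> \<in> F \<Longrightarrow> \<sigma> \<in> fst (c \<tau>) \<Longrightarrow> \<psi> \<tau> \<sigma> \<in> cls0 \<delta> q0 (\<phi> \<tau>)"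
    "\<And>\<tau> \<sigma> \<sigma>'. \<tau> \<in> F \<Longrightarrow> \<sigma> \<in> fst (c \<tau>) \<Longrightarrow> \<sigma>' \<in> fst (c \<tau>) \<Longrightarrow> prefix \<sigma> \<sigma>' \<Longrightarrow>
      \<psi> \<tau> \<sigma>' \<subseteq> \<psi> \<tau> \<sigma>"
    and label: "\<And>\<tau> \<sigma>. \<tau> \<in> F \<Longrightarrow> \<sigma> \<in> fst (c \<tau>) \<Longrightarrow> snd (c \<tau>) \<sigma> = A (\<psi> \<tau> \<sigma>)"
    using h_red_witnesses[OF assms(2)] by blast
  obtain U C where UC: "forest_cover F U" "\<And>\<tau>. \<tau> \<in> F \<Longrightarrow> sigma2_tree (fst (c \<tau>)) (C \<tau>)"
    "\<And>\<tau> x. \<tau> \<in> F \<Longrightarrow> x \<in> Util F U \<tau> \<Longrightarrow> [] \<in> fst (c \<tau>) \<and> x \<in> \<Union>(range (C \<tau> []))"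
    and leaf: "\<And>\<tau> \<sigma> x. \<tau> \<in> F \<Longrightarrow> \<sigma> \<in> fst (c \<tau>) \<Longrightarrow> x \<in> Util F U \<tau> \<Longrightarrow>
      x \<in> \<Union>(range (C \<tau> \<sigma>)) \<Longrightarrow> (\<forall>i. \<sigma> @ [i] \<in> fst (c \<tau>) \<longrightarrow> x \<notin> \<Union>(range (C \<tau> (\<sigma> @ [i])))) \<Longrightarrow>
      B x = snd (c \<tau>) \<sigma>"
    using SigmaF_witnesses[OF assms(3,1)] by blast
  have "h_reduction F U \<delta> q0 (\<lambda>\<tau>. fst (c \<tau>)) C \<phi> \<psi>"
    by (intro h_reduction.intro h_reduction_axioms.intro UC \<phi>\<psi>)
  then show ?thesis
    using leaf label that by simp
qed

theorem lemma4p7: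
  fixes \<delta> :: "'q::finite \<Rightarrow> 'x::finite \<Rightarrow> 'q" and q0 :: 'q
    and A :: "'q set \<Rightarrow> nat" and k :: nat
    and F :: "nat list set" and c :: "nat list \<Rightarrow> nat list set \<times> (nat list \<Rightarrow> nat)"
    and B :: "(nat \<Rightarrow> 'x) \<Rightarrow> nat"
  assumes "card (UNIV :: 'x set) \<ge> 2"
    and "k \<ge> 2"
    and "\<forall>C\<in>CM \<delta> q0. A C < k"
    and "labeled_forest k F c"
    and "h_red F c \<delta> q0 A"
    and "B \<in> SigmaF k F c"
  shows "le_CA B (A \<circ> fM \<delta> q0)"
proof -
  obtain U C \<phi> \<psi> where red: "h_reduction F U \<delta> q0 (\<lambda>\<tau>. fst (c \<tau>)) C \<phi> \<psi>"
    and leaf: "\<And>\<tau> \<sigma> x. \<tau> \<in> F \<Longrightarrow> \<sigma> \<in> fst (c \<tau>) \<Longrightarrow> x \<in> Util F U \<tau> \<Longrightarrow> x \<in> \<Union>(range (C \<tau> \<sigma>)) \<Longrightarrow>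
      (\<forall>i. \<sigma> @ [i] \<in> fst (c \<tau>) \<longrightarrow> x \<notin> \<Union>(range (C \<tau> (\<sigma> @ [i])))) \<Longrightarrow> B x = A (\<psi> \<tau> \<sigma>)"
    using h_reduction_from_hypotheses[OF assms(4-6)] by blast
  interpret h_reduction F U \<delta> q0 "\<lambda>\<tau>. fst (c \<tau>)" C \<phi> \<psi>
    by (fact red)
  have "B x = A (fM \<delta> q0 (reduction x))" for x
    using reduction_reaches_leaf[of x] leaf by force
  then show ?thesis
    unfolding le_CA_def using cont_w_reduction by (intro exI[of _ reduction]) auto
qed

end
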